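(* Let $B=\sum_{i=1}^{k-1}B_iz^{-i-1}dz\in O_B$ and $\Xi=\Phi(B)\in\mathrm{Rep}_{\widehat{\mathsf{Q}}}(V)$. (i) For any $\Xi$-invariant subspace $W=(W_p)_{p\in J_0}$ of $V$ (i.e. $W_p\subset V_p$ and $\Xi_\alpha(W_{s(\alpha)})\subset W_{t(\alpha)}$ for all arrows $\alpha$ of $\widehat{\mathsf{Q}}$), the subspace $S=\bigoplus_pW_p\subset\mathbb{C}^n$ is invariant under all $B_i$. (ii) Any subspace $S\subset\mathbb{C}^n$ invariant under all $B_i$ satisfies $S=\bigoplus_{p\in J_0}(S\cap V_p)$, and $W=(S\cap V_p)_{p\in J_0}$ is a $\Xi$-invariant subspace of $V$.
   Context: Let $\mathfrak{g}=\mathfrak{gl}_n(\mathbb{C})$ with a Cartan subalgebra $\mathfrak{t}$, $k>1$, $T=\sum_{i=1}^{k-1}T_iz^{-i}$, $T_i\in\mathfrak{t}$, $T_{k-1}\ne0$, $dT=\sum_i(-iT_i)z^{-i-1}dz$. $B_k=\{\sum_{i=0}^{k-1}b_iz^i:b_0=1\}\subset\mathrm{GL}_n(\mathbb{C}[z]/(z^k))$; $\mathfrak{b}_k^*=\{\sum_{i=1}^{k-1}X_iz^{-i-1}dz\}$ via $\mathrm{res}_{z=0}\mathrm{tr}$, coadjoint action $\mathrm{Ad}^*_bB=$ part of $bBb^{-1}$ in degrees $z^{-i-1}dz$, $1\le i\le k-1$; $O_B$ is the $B_k$-orbit of $dT$. For $i=0,\dots,k-2$, $\mathbb{C}^n=\bigoplus_{p\in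 J_i}V^{(i)}_p$ is the decomposition into simultaneous eigenspaces of $(T_{i+1},\dots,T_{k-1})$, $\pi_i:J_0\to J_i$ natural maps; total orders on the $J_i$ with $\pi_{i+1}(p)<\pi_{i+1}(q)\Rightarrow p<q$. $\mathfrak{p}_i^+=\bigoplus_{p\ge q}\mathrm{Hom}(V^{(i)}_p,V^{(i)}_q)$, $\mathfrak{p}_i^-=\bigoplus_{p\le q}$, $\mathfrak{u}_i^\pm=\bigoplus_{p\gtrless q}$, with $\mathfrak{p}^\pm_{k-1}=\mathfrak{g}$, $\mathfrak{u}^\pm_{k-1}=0$. Each $b\in B_k$ factors uniquely $b=b_-b_+$ with $(b_-)_i\in\mathfrak{u}_i^-$, $(b_+)_i\in\mathfrak{p}_i^+$. For $B=\mathrm{Ad}^*_b(dT)$, $B'$ is the part of $b_-^{-1}B$ in degrees $z^{-i-1}dz$ ($1\le i\le k-1$), $Q=b_--1=\sum Q_iz^i$, $P=\sum P_iz^{-i-1}dz$ with $P_i$ the $\mathfrak{u}_i^+$-component of $B'_i$ along $\mathfrak{g}=\mathfrak{u}_i^+\oplus\mathfrak{p}_i^-$. Quiver $\mathsf{Q}$: vertices $J_0$, $V_p=V^{(0)}_p$, for $p<q$ arrows $\alpha_{qp;i}:p\to q$ for $i=1,\dots,m_{p,q}$, $m_{p,q}=\max\{i\in\{0,\dots,k-2\}:\pi_i(p)<\pi_i(q)\}$; $\widehat{\mathsf{Q}}$ its double. $\Phi(B)=\Xi$ where $\Xi_{\alpha_{qp;i}}$ is the $\mathrm{Hom}(V_p,V_q)$-block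 of $Q_i$ and $\Xi_{\bar\alpha_{qp;i}}$ the $\mathrm{Hom}(V_q,V_p)$-block of $P_i$. *)

theory Defs
  imports "HOL-Analysis.Analysis"
begin

(* Matrices in gl_n(C) are  complex^'n^'n  (n = CARD('n)); vectors of C^n are complex^'n.
   A truncated series  sum_i b_i z^i  (mod z^k) is a coefficient function  nat => matrix;
   an element  sum_i X_i z^(-i-1) dz  of b_k^* is a coefficient function X with X i = X_i
   (only 1 <= i <= k-1 are used). *)

type_synonym 'n cmat = "complex^'n^'n"

definition is_diag :: "'n::finite cmat \<Rightarrow> bool" where
  "is_diag A \<longleftrightarrow> (\<forall>a b. a \<noteq> b \<longrightarrow> A $ a $ b = 0)"

definition tmul :: "(nat \<Rightarrow> 'n::finite cmat) \<Rightarrow> (nat \<Rightarrow> 'n cmat) \<Rightarrow> nat \<Rightarrow> 'n cmat" where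
  "tmul f g i = (\<Sum>j\<le>i. f j ** g (i - j))"

function tinv :: "(nat \<Rightarrow> 'n::finite cmat) \<Rightarrow> nat \<Rightarrow> 'n cmat" where
  "tinv f m = (if m = 0 then mat 1 else - (\<Sum>j\<in>{1..m}. f j ** tinv f (m - j)))"
  by auto
termination by (relation "Wellfounded.measure snd") auto

(* coadjoint action: coefficient of z^(-m-1) dz of  b X b^{-1} *)
definition coad :: "nat \<Rightarrow> (nat \<Rightarrow> 'n::finite cmat) \<Rightarrow> (nat \<Rightarrow> 'n cmat) \<Rightarrow> nat \<Rightarrow> 'n cmat" where
  "coad k b X m = (\<Sum>j<k. \<Sum>l<k. if m + j + l < k then b j ** X (m + j + l) ** tinv b l else 0)"

(* dT = sum_i (-i T_i) z^(-i-1) dz *)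
definition dT :: "(nat \<Rightarrow> 'n::finite cmat) \<Rightarrow> nat \<Rightarrow> 'n cmat" where
  "dT T i = - scaleR (real i) (T i)"

(* label of basis index a in J_i : the simultaneous eigenvalues of (T_{i+1},...,T_{k-1}) *)
definition key :: "nat \<Rightarrow> (nat \<Rightarrow> 'n::finite cmat) \<Rightarrow> nat \<Rightarrow> 'n \<Rightarrow> complex list" where
  "key k T i a = map (\<lambda>l. T l $ a $ a) [Suc i..<k]"

definition J :: "nat \<Rightarrow> (nat \<Rightarrow> 'n::finite cmat) \<Rightarrow> nat \<Rightarrow> complex list set" where
  "J k T i = key k T i ` UNIV"

definition pi_J :: "nat \<Rightarrow> complex list \<Rightarrow> complex list" where
  "pi_J i p = drop i p"

(* strict order on J_i (given for i <= k-2; J_{k-1} is a single point) *)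
definition ltJ :: "nat \<Rightarrow> (nat \<Rightarrow> (complex list \<times> complex list) set) \<Rightarrow> nat \<Rightarrow> complex list \<Rightarrow> complex list \<Rightarrow> bool" where
  "ltJ k ord i p q \<longleftrightarrow> i < k - 1 \<and> (p, q) \<in> ord i"

definition leJ :: "nat \<Rightarrow> (nat \<Rightarrow> (complex list \<times> complex list) set) \<Rightarrow> nat \<Rightarrow> complex list \<Rightarrow> complex list \<Rightarrow> bool" where
  "leJ k ord i p q \<longleftrightarrow> p = q \<or> ltJ k ord i p q"

definition Vsp :: "nat \<Rightarrow> (nat \<Rightarrow> 'n::finite cmat) \<Rightarrow> nat \<Rightarrow> complex list \<Rightarrow> (complex^'n) set" where
  "Vsp k T i p = {v. \<forall>a. key k T i a \<noteq> p \<longrightarrow> v $ a = 0}"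

(* X $ a $ b is the component of X mapping e_b (in V_{key b}) to e_a (in V_{key a}) *)
definition p_plus where
  "p_plus k T ord i (X::'n::finite cmat) \<longleftrightarrow>
     (\<forall>a b. X $ a $ b \<noteq> 0 \<longrightarrow> leJ k ord i (key k T i a) (key k T i b))"
definition u_plus where
  "u_plus k T ord i (X::'n::finite cmat) \<longleftrightarrow>
     (\<forall>a b. X $ a $ b \<noteq> 0 \<longrightarrow> ltJ k ord i (key k T i a) (key k T i b))"
definition p_minus where
  "p_minus k T ord i (X::'n::finite cmat) \<longleftrightarrow>
     (\<forall>a b. X $ a $ b \<noteq> 0 \<longrightarrow> leJ k ord i (key k T i b) (key k T i a))"
definition u_minus where
  "u_minus k T ord i (X::'n::finite cmat) \<longleftrightarrow>
     (\<forall>a b. X $ a $ b \<noteq> 0 \<longrightarrow> ltJ k ord i (key k T i b) (key k T i a))"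

(* u_i^+ component along g = u_i^+ (+) p_i^- *)
definition uplus_part :: "nat \<Rightarrow> (nat \<Rightarrow> 'n::finite cmat) \<Rightarrow> (nat \<Rightarrow> (complex list \<times> complex list) set)
    \<Rightarrow> nat \<Rightarrow> 'n cmat \<Rightarrow> 'n cmat" where
  "uplus_part k T ord i X =
     (\<chi> a b. if ltJ k ord i (key k T i a) (key k T i b) then X $ a $ b else 0)"

(* B' : part of b_-^{-1} B in degrees z^(-m-1) dz, 1 <= m <= k-1 *)
definition Bprime :: "nat \<Rightarrow> (nat \<Rightarrow> 'n::finite cmat) \<Rightarrow> (nat \<Rightarrow> 'n cmat) \<Rightarrow> nat \<Rightarrow> 'n cmat" where
  "Bprime k bm B m = (\<Sum>j<k. if m + j < k then tinv bm j ** B (m + j) else 0)"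

definition Pmat where
  "Pmat k T ord bm B i = uplus_part k T ord i (Bprime k bm B i)"

definition Qmat :: "(nat \<Rightarrow> 'n::finite cmat) \<Rightarrow> nat \<Rightarrow> 'n cmat" where
  "Qmat bm i = (if i = 0 then 0 else bm i)"

definition mpq where
  "mpq k ord p q = Max {i. i \<le> k - 2 \<and> ltJ k ord i (pi_J i p) (pi_J i q)}"

(* arrows of the doubled quiver: Fwd p q i = alpha_{qp;i} : p -> q,  Bwd p q i = its reverse *)
datatype arrow = Fwd "complex list" "complex list" nat | Bwd "complex list" "complex list" nat

fun src :: "arrow \<Rightarrow> complex list" where
  "src (Fwd p q i) = p" | "src (Bwd p q i) = q"
fun tgt :: "arrow \<Rightarrow> complex list" where
  "tgt (Fwd p q i) = q" | "tgt (Bwd p q i) = p"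

definition arrows :: "nat \<Rightarrow> (nat \<Rightarrow> 'n::finite cmat) \<Rightarrow> (nat \<Rightarrow> (complex list \<times> complex list) set) \<Rightarrow> arrow set" where
  "arrows k T ord =
     {Fwd p q i | p q i. p \<in> J k T 0 \<and> q \<in> J k T 0 \<and> ltJ k ord 0 p q \<and> 1 \<le> i \<and> i \<le> mpq k ord p q}
   \<union> {Bwd p q i | p q i. p \<in> J k T 0 \<and> q \<in> J k T 0 \<and> ltJ k ord 0 p q \<and> 1 \<le> i \<and> i \<le> mpq k ord p q}"

(* Hom(V_p, V_q)-block of X (for the decomposition into V_p = V^{(0)}_p), extended by 0 *)
definition block :: "nat \<Rightarrow> (nat \<Rightarrow> 'n::finite cmat) \<Rightarrow> 'n cmat \<Rightarrow> complex list \<Rightarrow> complex list \<Rightarrow> 'n cmat" where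
  "block k T X p q = (\<chi> a b. if key k T 0 a = q \<and> key k T 0 b = p then X $ a $ b else 0)"

fun Xi :: "nat \<Rightarrow> (nat \<Rightarrow> 'n::finite cmat) \<Rightarrow> (nat \<Rightarrow> (complex list \<times> complex list) set)
    \<Rightarrow> (nat \<Rightarrow> 'n cmat) \<Rightarrow> (nat \<Rightarrow> 'n cmat) \<Rightarrow> arrow \<Rightarrow> 'n cmat" where
  "Xi k T ord bm B (Fwd p q i) = block k T (Qmat bm i) p q"
| "Xi k T ord bm B (Bwd p q i) = block k T (Pmat k T ord bm B i) q p"

definition Xi_invariant where
  "Xi_invariant k T ord bm B (W :: complex list \<Rightarrow> (complex^'n::finite) set) \<longleftrightarrow>
     (\<forall>p\<in>J k T 0. vec.subspace (W p) \<and> W p \<subseteq> Vsp k T 0 p)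
   \<and> (\<forall>\<alpha>\<in>arrows k T ord. \<forall>w\<in>W (src \<alpha>). Xi k T ord bm B \<alpha> *v w \<in> W (tgt \<alpha>))"

definition invariant_under :: "(complex^'n::finite) set \<Rightarrow> 'n cmat \<Rightarrow> bool" where
  "invariant_under S A \<longleftrightarrow> (\<forall>v\<in>S. A *v v \<in> S)"

end

theory Submission
  imports Defs "HOL-Computational_Algebra.Formal_Power_Series"
begin

text \<open>Write \<open>b = b\<^sub>- b\<^sub>+\<close> and \<open>gamma = Ad\<^sup>*\<^sub>b\<^sub>+ dT\<close>, so that \<open>B = Ad\<^sup>*\<^sub>b\<^sub>- gamma\<close>; since
  \<open>b\<^sub>+ \<in> P\<^sup>+\<close>, \<open>gamma\<^sub>i - dT\<^sub>i\<close> lies in \<open>u\<^sub>i\<^sup>+\<close>.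

  (ii) A subspace \<open>S\<close> invariant under all \<open>B\<^sub>i\<close> is, by descending induction on the level \<open>m\<close>,
  graded for the decomposition \<open>\<complex>\<^sup>n = \<Oplus>\<^sub>p V\<^sup>(\<^sup>m\<^sup>)\<^sub>p\<close> and invariant under the coadjoint action
  \<open>rho m\<close> of the level-\<open>m\<close> block-diagonal part of \<open>b\<^sub>-\<close> on that of \<open>gamma\<close>. The step from \<open>m\<close> to
  \<open>m - 1\<close>: \<open>dT\<^sub>m\<close> is a coefficient of \<open>rho m\<close>, and its eigenspaces refine the grading; \<open>rho m\<close> is the
  conjugate of the corresponding action at level \<open>m - 1\<close> by a series whose coefficients only connect
  blocks separated by \<open>T\<^sub>m\<close>, and these coefficients are recovered from their commutators with \<open>dT\<^sub>m\<close>.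
  At level \<open>0\<close> this yields invariance under \<open>b\<^sub>-\<close> and, taking \<open>u\<^sup>+\<close>-parts, under \<open>P\<close>.

  (i) For a \<open>\<Xi>\<close>-invariant \<open>W\<close>, the graded subspace \<open>\<Oplus>\<^sub>p W\<^sub>p\<close> is invariant under \<open>b\<^sub>-\<close> and \<open>P\<close>;
  then \<open>gamma\<close> is recovered from the \<open>u\<^sup>+\<close>-parts of \<open>b\<^sub>-\<^sup>-\<^sup>1 B\<close> by descending induction on the degree.\<close>

section \<open>Matrices as a ring\<close>

text \<open>Square matrices under \<open>**\<close> do not form an instance of \<open>ring_1\<close>; this copy does, so that
  truncated series of matrices can be multiplied and inverted with generic ring lemmas.\<close>

typedef (overloaded) ('n::finite) mat_ring = "UNIV :: 'n cmat set"
  morphisms mat_of ring_of by auto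

setup_lifting type_definition_mat_ring

instantiation mat_ring :: (finite) ring_1
begin
lift_definition zero_mat_ring :: "'a mat_ring" is "0" .
lift_definition one_mat_ring :: "'a mat_ring" is "mat 1" .
lift_definition plus_mat_ring :: "'a mat_ring \<Rightarrow> 'a mat_ring \<Rightarrow> 'a mat_ring" is "(+)" .
lift_definition minus_mat_ring :: "'a mat_ring \<Rightarrow> 'a mat_ring \<Rightarrow> 'a mat_ring" is "(-)" .
lift_definition uminus_mat_ring :: "'a mat_ring \<Rightarrow> 'a mat_ring" is "uminus" .
lift_definition times_mat_ring :: "'a mat_ring \<Rightarrow> 'a mat_ring \<Rightarrow> 'a mat_ring" is "(**)" .
instance
proof
  fix a b c :: "'a mat_ring"
  show "a * b * c = a * (b * c)" by transfer (simp add: matrix_mul_assoc)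
  show "1 * a = a" by transfer simp
  show "a * 1 = a" by transfer simp
  show "(a + b) * c = a * c + b * c" by transfer (vector matrix_matrix_mult_def sum.distrib[symmetric] field_simps)
  show "a * (b + c) = a * b + a * c" by transfer (simp add: matrix_add_ldistrib)
  show "a + b + c = a + (b + c)" by transfer (simp add: add.assoc)
  show "a + b = b + a" by transfer (simp add: add.commute)
  show "0 + a = a" by transfer simp
  show "- a + a = 0" by transfer simp
  show "a - b = a + - b" by transfer simp
  show "(0::'a mat_ring) \<noteq> 1"
  proof transfer
    have "mat 1 $ undefined $ undefined \<noteq> (0 :: 'a cmat) $ undefined $ undefined"
      by (simp add: mat_def)
    then show "(0 :: 'a cmat) \<noteq> mat 1" by metis
  qed
qed
end

lemma mat_of_mult: "mat_of (X * Y) = mat_of X ** mat_of Y" by transfer simp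
lemma mat_of_add: "mat_of (X + Y) = mat_of X + mat_of Y" by transfer simp
lemma mat_of_uminus: "mat_of (- X) = - mat_of X" by transfer simp
lemma mat_of_one: "mat_of 1 = mat 1" by transfer simp
lemma mat_of_zero: "mat_of 0 = 0" by transfer simp
lemma mat_of_ring_of [simp]: "mat_of (ring_of A) = A" by (simp add: ring_of_inverse)

lemma ring_of_mult: "ring_of (A ** B) = ring_of A * ring_of B"
  by (metis mat_of_inverse mat_of_mult mat_of_ring_of)
lemma ring_of_uminus: "ring_of (- A) = - ring_of A"
  by (metis mat_of_inverse mat_of_uminus mat_of_ring_of)
lemma ring_of_one: "ring_of (mat 1) = 1"
  by (metis mat_of_inverse mat_of_one)
lemma ring_of_zero: "ring_of 0 = 0"
  by (metis mat_of_inverse mat_of_zero)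
lemma ring_of_add: "ring_of (A + B) = ring_of A + ring_of B"
  by (metis mat_of_inverse mat_of_add mat_of_ring_of)
lemma ring_of_sum: "ring_of (sum f A) = (\<Sum>x\<in>A. ring_of (f x))"
  by (induction A rule: infinite_finite_induct) (auto simp: ring_of_zero ring_of_add)

definition entry :: "'n::finite mat_ring \<Rightarrow> 'n \<Rightarrow> 'n \<Rightarrow> complex" where
  "entry X a b = mat_of X $ a $ b"

lemma entry_ring_of [simp]: "entry (ring_of A) a b = A $ a $ b"
  by (simp add: entry_def)
lemma entry_mult: "entry (X * Y) a b = (\<Sum>c\<in>UNIV. entry X a c * entry Y c b)"
  by (simp add: entry_def mat_of_mult matrix_matrix_mult_def)
lemma entry_add [simp]: "entry (X + Y) a b = entry X a b + entry Y a b"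
  by (simp add: entry_def mat_of_add)
lemma entry_uminus [simp]: "entry (- X) a b = - entry X a b"
  by (simp add: entry_def mat_of_uminus)
lemma entry_diff [simp]: "entry (X - Y) a b = entry X a b - entry Y a b"
  by (metis diff_conv_add_uminus entry_add entry_uminus)
lemma entry_one: "entry 1 a b = (if a = b then 1 else 0)"
  by (simp add: entry_def mat_of_one mat_def)
lemma entry_zero [simp]: "entry 0 a b = 0"
  by (simp add: entry_def mat_of_zero)
lemma mat_ring_eqI: "(\<And>a b. entry X a b = entry Y a b) \<Longrightarrow> X = Y"
  unfolding entry_def by (metis mat_of_inject vec_eq_iff)

lemma mat_of_mult_vec_nth: "(mat_of X *v v) $ a = (\<Sum>b\<in>UNIV. entry X a b * v $ b)"
  by (simp add: matrix_vector_mult_def entry_def)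

definition masked :: "('n::finite \<Rightarrow> 'n \<Rightarrow> complex) \<Rightarrow> 'n mat_ring \<Rightarrow> 'n mat_ring" where
  "masked w X = ring_of (\<chi> a b. w a b * entry X a b)"

lemma entry_masked [simp]: "entry (masked w X) a b = w a b * entry X a b"
  by (simp add: masked_def)

lemma masked_add: "masked w (X + Y) = masked w X + masked w Y"
  by (rule mat_ring_eqI) (simp add: algebra_simps)
lemma masked_diff: "masked w (X - Y) = masked w X - masked w Y"
  by (rule mat_ring_eqI) (simp add: algebra_simps)

section \<open>Truncated series\<close>

definition series_mult :: "(nat \<Rightarrow> 'a::ring_1) \<Rightarrow> (nat \<Rightarrow> 'a) \<Rightarrow> nat \<Rightarrow> 'a" where
  "series_mult f g i = (\<Sum>j\<le>i. f j * g (i - j))"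

fun series_inv :: "(nat \<Rightarrow> 'a::ring_1) \<Rightarrow> nat \<Rightarrow> 'a" where
  "series_inv f m = (if m = 0 then 1 else - (\<Sum>j\<in>{1..m}. f j * series_inv f (m - j)))"
declare series_inv.simps [simp del]

definition series_one :: "nat \<Rightarrow> 'a::ring_1" where
  "series_one i = (if i = 0 then 1 else 0)"

text \<open>For a series \<open>g = \<Sum> g\<^sub>j z\<^sup>j\<close> and an element \<open>x = \<Sum> x\<^sub>i z\<^sup>-\<^sup>i\<^sup>-\<^sup>1 dz\<close> of
  \<open>\<Sum>\<^sub>i<K\<close>-truncated polar parts, \<open>lmult K g x\<close> and \<open>rmult K x g\<close> are the polar parts of
  \<open>g x\<close> and \<open>x g\<close>; the coadjoint action of \<open>g\<close> on \<open>x\<close> is \<open>rmult K (lmult K g x) (series_inv g)\<close>.\<close>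

definition lmult :: "nat \<Rightarrow> (nat \<Rightarrow> 'a::ring_1) \<Rightarrow> (nat \<Rightarrow> 'a) \<Rightarrow> nat \<Rightarrow> 'a" where
  "lmult K g x i = (\<Sum>j<K. if i + j < K then g j * x (i + j) else 0)"

definition rmult :: "nat \<Rightarrow> (nat \<Rightarrow> 'a::ring_1) \<Rightarrow> (nat \<Rightarrow> 'a) \<Rightarrow> nat \<Rightarrow> 'a" where
  "rmult K x g i = (\<Sum>j<K. if i + j < K then x (i + j) * g j else 0)"

lemma Abs_fps_series_mult: "Abs_fps (series_mult f g) = Abs_fps f * Abs_fps g"
  by (simp add: fps_eq_iff series_mult_def fps_mult_nth atLeast0AtMost)

lemma Abs_fps_series_one: "Abs_fps series_one = 1"
  by (simp add: fps_eq_iff series_one_def)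

lemma Abs_fps_eq_iff: "Abs_fps f = Abs_fps g \<longleftrightarrow> f = g"
  by (auto simp: fps_eq_iff fun_eq_iff)

lemma series_mult_assoc: "series_mult (series_mult f g) h = series_mult f (series_mult g h)"
  by (simp add: Abs_fps_eq_iff[symmetric] Abs_fps_series_mult mult.assoc)

lemma series_mult_one_right [simp]: "series_mult f series_one = f"
  by (simp add: Abs_fps_eq_iff[symmetric] Abs_fps_series_mult Abs_fps_series_one)

lemma series_inv_0 [simp]: "series_inv f 0 = 1"
  by (simp add: series_inv.simps)

lemma series_mult_inv_right: "f 0 = 1 \<Longrightarrow> series_mult f (series_inv f) = series_one"
proof (rule ext)
  fix i assume f0: "f 0 = 1"
  show "series_mult f (series_inv f) i = series_one i"
  proof (cases "i = 0")
    case False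
    have "{..i} = insert 0 {1..i}" by auto
    then have "series_mult f (series_inv f) i
        = series_inv f i + (\<Sum>j\<in>{1..i}. f j * series_inv f (i - j))"
      by (simp add: series_mult_def f0)
    also have "\<dots> = 0" using False by (subst series_inv.simps) simp
    finally show ?thesis using False by (simp add: series_one_def)
  qed (simp add: series_mult_def series_one_def f0)
qed

lemma Abs_fps_series_inv: "f 0 = 1 \<Longrightarrow> Abs_fps f * Abs_fps (series_inv f) = 1"
  by (simp add: Abs_fps_series_mult[symmetric] series_mult_inv_right Abs_fps_series_one)

text \<open>A left inverse is obtained from the right inverse of the right inverse, as in any monoid.\<close>

lemma series_mult_inv_left:
  assumes f0: "f 0 = 1" shows "series_mult (series_inv f) f = series_one"
proof -
  let ?F = "Abs_fps f" and ?G = "Abs_fps (series_inv f)" and ?H = "Abs_fps (series_inv (series_inv f))"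
  have FG: "?F * ?G = 1" and GH: "?G * ?H = 1"
    using Abs_fps_series_inv[of f] Abs_fps_series_inv[of "series_inv f"] f0 by simp_all
  have "?F = ?F * (?G * ?H)" using GH by simp
  also have "\<dots> = ?H" using FG by (simp add: mult.assoc[symmetric])
  finally have "?G * ?F = 1" using GH by simp
  then show ?thesis by (simp add: Abs_fps_eq_iff[symmetric] Abs_fps_series_mult Abs_fps_series_one)
qed

lemma series_inv_cong:
  assumes "\<forall>j<K. f j = f' j" shows "m < K \<Longrightarrow> series_inv f m = series_inv f' m"
proof (induction m rule: less_induct)
  case (less m)
  then show ?case
    by (subst (1 2) series_inv.simps) (auto intro!: sum.cong simp: assms)
qed

lemma series_inv_mult:
  assumes f0: "f 0 = 1" and h0: "h 0 = 1"
  shows "series_inv (series_mult f h) = series_mult (series_inv h) (series_inv f)"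
proof -
  let ?F = "Abs_fps f" and ?H = "Abs_fps h"
  let ?Fi = "Abs_fps (series_inv f)" and ?Hi = "Abs_fps (series_inv h)"
  have fh0: "series_mult f h 0 = 1" using f0 h0 by (simp add: series_mult_def)
  have X: "(?F * ?H) * Abs_fps (series_inv (series_mult f h)) = 1"
    using Abs_fps_series_inv[of "series_mult f h", OF fh0] by (simp add: Abs_fps_series_mult)
  have "?Fi * ?F = 1" "?Hi * ?H = 1"
    using series_mult_inv_left[of f, OF f0] series_mult_inv_left[of h, OF h0]
    by (simp_all add: Abs_fps_eq_iff[symmetric] Abs_fps_series_mult Abs_fps_series_one)
  then have L: "(?Hi * ?Fi) * (?F * ?H) = 1"
    by (metis mult.assoc mult_1)
  have "Abs_fps (series_inv (series_mult f h)) = ((?Hi * ?Fi) * (?F * ?H)) * Abs_fps (series_inv (series_mult f h))"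
    using L by simp
  also have "\<dots> = ?Hi * ?Fi" using X by (simp only: mult.assoc) simp
  finally show ?thesis by (simp add: Abs_fps_eq_iff[symmetric] Abs_fps_series_mult)
qed

lemma sum_pairs_reindex:
  fixes F :: "nat \<Rightarrow> nat \<Rightarrow> 'a::comm_monoid_add"
  shows "(\<Sum>j<K. if i + j < K then (\<Sum>l<K. if i + j + l < K then F j l else 0) else 0)
       = (\<Sum>s<K. if i + s < K then (\<Sum>j\<le>s. F j (s - j)) else 0)"
proof -
  have "(\<Sum>j<K. if i + j < K then (\<Sum>l<K. if i + j + l < K then F j l else 0) else 0)
      = (\<Sum>(j,l)\<in>{..<K}\<times>{..<K}. if i + j + l < K then F j l else 0)"
    by (auto simp: sum.cartesian_product[symmetric] intro!: sum.cong)
  also have "\<dots> = (\<Sum>(j,l)\<in>{(j,l). i + j + l < K}. F j l)"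
    by (rule sum.mono_neutral_cong_right) (auto split: if_splits)
  also have "\<dots> = (\<Sum>(s,j)\<in>{(s,j). i + s < K \<and> j \<le> s}. F j (s - j))"
    by (rule sum.reindex_bij_witness[where i="\<lambda>(s,j). (j, s - j)" and j="\<lambda>(j,l). (j + l, j)"]) auto
  also have "\<dots> = (\<Sum>(s,j)\<in>{..<K}\<times>{..<K}. if i + s < K \<and> j \<le> s then F j (s - j) else 0)"
    by (rule sum.mono_neutral_cong_left) (auto split: if_splits)
  also have "\<dots> = (\<Sum>s<K. if i + s < K then (\<Sum>j\<le>s. F j (s - j)) else 0)"
    unfolding sum.cartesian_product[symmetric]
  proof (intro sum.cong refl)
    show "(\<Sum>j<K. if i + s < K \<and> j \<le> s then F j (s - j) else 0)
        = (if i + s < K then \<Sum>j\<le>s. F j (s - j) else 0)" if "s \<in> {..<K}" for s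
      using that by (auto intro!: sum.mono_neutral_cong_right split: if_splits)
  qed
  finally show ?thesis .
qed

lemma lmult_lmult: "lmult K g (lmult K h x) i = lmult K (series_mult g h) x i"
proof -
  have "lmult K g (lmult K h x) i = (\<Sum>j<K. if i + j < K then
          (\<Sum>l<K. if i + j + l < K then g j * h l * x (i + j + l) else 0) else 0)"
    by (auto simp: lmult_def sum_distrib_left mult.assoc if_distrib intro!: sum.cong)
  also have "\<dots> = (\<Sum>s<K. if i + s < K then (\<Sum>j\<le>s. g j * h (s - j) * x (i + (j + (s - j)))) else 0)"
    by (subst sum_pairs_reindex) (auto intro!: sum.cong if_cong)
  also have "\<dots> = lmult K (series_mult g h) x i"
    by (auto simp: lmult_def series_mult_def sum_distrib_right intro!: sum.cong)
  finally show ?thesis .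
qed

lemma rmult_rmult: "rmult K (rmult K x g) h i = rmult K x (series_mult g h) i"
proof -
  have "rmult K (rmult K x g) h i = (\<Sum>j<K. if i + j < K then
          (\<Sum>l<K. if i + j + l < K then x (i + (j + l)) * g l * h j else 0) else 0)"
    by (auto simp: rmult_def sum_distrib_right add.assoc intro!: sum.cong)
  also have "\<dots> = (\<Sum>s<K. if i + s < K then (\<Sum>j\<le>s. x (i + s) * g (s - j) * h j) else 0)"
    by (subst sum_pairs_reindex) (auto intro!: sum.cong if_cong)
  also have "\<dots> = (\<Sum>s<K. if i + s < K then (\<Sum>j\<le>s. x (i + s) * g j * h (s - j)) else 0)"
  proof (rule sum.cong[OF refl])
    fix s
    have "(\<Sum>j\<le>s. x (i + s) * g (s - j) * h j) = (\<Sum>j\<le>s. x (i + s) * g j * h (s - j))"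
      by (rule sum.reindex_bij_witness[where i="\<lambda>j. s - j" and j="\<lambda>j. s - j"]) auto
    then show "(if i + s < K then \<Sum>j\<le>s. x (i + s) * g (s - j) * h j else 0)
        = (if i + s < K then \<Sum>j\<le>s. x (i + s) * g j * h (s - j) else 0)" by simp
  qed
  also have "\<dots> = rmult K x (series_mult g h) i"
    by (auto simp: rmult_def series_mult_def sum_distrib_left mult.assoc intro!: sum.cong)
  finally show ?thesis .
qed

lemma lmult_rmult: "lmult K g (rmult K x h) i = rmult K (lmult K g x) h i"
proof -
  have "lmult K g (rmult K x h) i
      = (\<Sum>j<K. \<Sum>l<K. if i + j + l < K then g j * x (i + j + l) * h l else 0)"
    by (auto simp: lmult_def rmult_def sum_distrib_left mult.assoc add.assoc intro!: sum.cong)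
  also have "\<dots> = (\<Sum>l<K. \<Sum>j<K. if i + j + l < K then g j * x (i + j + l) * h l else 0)"
    by (rule sum.swap)
  also have "\<dots> = rmult K (lmult K g x) h i"
    by (auto simp: lmult_def rmult_def sum_distrib_right ac_simps intro!: sum.cong)
  finally show ?thesis .
qed

lemma lmult_one: "i < K \<Longrightarrow> lmult K series_one x i = x i"
  by (simp add: lmult_def series_one_def if_distrib if_distribR sum.If_cases cong: if_cong)

lemma rmult_one: "i < K \<Longrightarrow> rmult K x series_one i = x i"
  by (simp add: rmult_def series_one_def if_distrib if_distribR sum.If_cases cong: if_cong)

lemma lmult_cong:
  "(\<forall>j<K. g j = g' j) \<Longrightarrow> (\<forall>j. i \<le> j \<longrightarrow> j < K \<longrightarrow> x j = x' j) \<Longrightarrow> lmult K g x i = lmult K g' x' i"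
  by (auto simp: lmult_def intro!: sum.cong)

lemma rmult_cong:
  "(\<forall>j<K. g j = g' j) \<Longrightarrow> (\<forall>j. i \<le> j \<longrightarrow> j < K \<longrightarrow> x j = x' j) \<Longrightarrow> rmult K x g i = rmult K x' g' i"
  by (auto simp: rmult_def intro!: sum.cong)

lemma lmult_add: "lmult K g (\<lambda>i. x i + y i) i = lmult K g x i + lmult K g y i"
  by (simp add: lmult_def sum.distrib[symmetric] distrib_left if_distrib cong: if_cong)

lemma rmult_add: "rmult K (\<lambda>i. x i + y i) g i = rmult K x g i + rmult K y g i"
  by (simp add: rmult_def sum.distrib[symmetric] distrib_right if_distrib cong: if_cong)

lemma coadjoint_add:
  "rmult K (lmult K x (\<lambda>j. y j + z j)) w i = rmult K (lmult K x y) w i + rmult K (lmult K x z) w i"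
proof -
  have "rmult K (lmult K x (\<lambda>j. y j + z j)) w i = rmult K (\<lambda>j. lmult K x y j + lmult K x z j) w i"
    by (rule rmult_cong) (auto simp: lmult_add)
  then show ?thesis by (simp add: rmult_add)
qed

lemma lmult_split:
  "i < K \<Longrightarrow> lmult K g x i = g 0 * x i + (\<Sum>j\<in>{1..<K}. if i + j < K then g j * x (i + j) else 0)"
  by (simp add: lmult_def lessThan_atLeast0 sum.atLeast_Suc_lessThan)

lemma rmult_split:
  "i < K \<Longrightarrow> rmult K x g i = x i * g 0 + (\<Sum>j\<in>{1..<K}. if i + j < K then x (i + j) * g j else 0)"
  by (simp add: rmult_def lessThan_atLeast0 sum.atLeast_Suc_lessThan)

lemma coadjoint_commuting:
  assumes "\<And>i j. z i * x j = x j * z i" and "series_mult x y = series_one" and "i < K"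
  shows "rmult K (lmult K x z) y i = z i"
proof -
  have "rmult K (lmult K x z) y i = rmult K (rmult K z x) y i"
    by (intro rmult_cong) (auto simp: lmult_def rmult_def assms(1) intro!: sum.cong)
  also have "\<dots> = z i" by (simp add: rmult_rmult assms(2,3) rmult_one)
  finally show ?thesis .
qed

lemma coadjoint_single:
  assumes "x 0 = 1" "y 0 = 1" "m \<le> i" "i < K"
  shows "rmult K (lmult K x (\<lambda>j. if j = m then E else 0)) y i = (if i = m then E else 0)"
proof -
  have "lmult K x (\<lambda>j. if j = m then E else 0) j = (if j = m then E else 0)" if "m \<le> j" "j < K" for j
    using that assms(1) by (simp add: lmult_split sum.neutral)
  then show ?thesis
    using assms by (simp add: rmult_split sum.neutral)
qed

section \<open>Subring predicates and supports\<close>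

locale subring_pred =
  fixes P :: "'a::ring_1 \<Rightarrow> bool"
  assumes closed_zero: "P 0" and closed_one: "P 1"
    and closed_add: "P x \<Longrightarrow> P y \<Longrightarrow> P (x + y)"
    and closed_uminus: "P x \<Longrightarrow> P (- x)"
    and closed_mult: "P x \<Longrightarrow> P y \<Longrightarrow> P (x * y)"
begin

lemma closed_diff: "P x \<Longrightarrow> P y \<Longrightarrow> P (x - y)"
  by (metis closed_add closed_uminus diff_conv_add_uminus)

lemma closed_sum: "(\<And>x. x \<in> A \<Longrightarrow> P (f x)) \<Longrightarrow> P (sum f A)"
  by (induction A rule: infinite_finite_induct) (auto intro: closed_zero closed_add)

lemma closed_series_mult: "(\<And>j. j \<le> i \<Longrightarrow> P (f j) \<and> P (g j)) \<Longrightarrow> P (series_mult f g i)"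
  unfolding series_mult_def by (intro closed_sum closed_mult) auto

lemma closed_series_inv: "(\<And>j. 1 \<le> j \<Longrightarrow> j \<le> m \<Longrightarrow> P (f j)) \<Longrightarrow> P (series_inv f m)"
proof (induction m rule: less_induct)
  case (less m)
  show ?case
  proof (cases "m = 0")
    case False
    have "P (\<Sum>j\<in>{1..m}. f j * series_inv f (m - j))"
      using less False by (intro closed_sum closed_mult) auto
    then show ?thesis using False by (subst series_inv.simps) (simp add: closed_uminus)
  qed (simp add: closed_one)
qed

lemma closed_lmult:
  "(\<And>j. j < K \<Longrightarrow> P (g j)) \<Longrightarrow> (\<And>j. i \<le> j \<Longrightarrow> j < K \<Longrightarrow> P (x j)) \<Longrightarrow> P (lmult K g x i)"
  unfolding lmult_def by (intro closed_sum) (auto intro: closed_mult closed_zero)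

lemma closed_rmult:
  "(\<And>j. j < K \<Longrightarrow> P (g j)) \<Longrightarrow> (\<And>j. i \<le> j \<Longrightarrow> j < K \<Longrightarrow> P (x j)) \<Longrightarrow> P (rmult K x g i)"
  unfolding rmult_def by (intro closed_sum) (auto intro: closed_mult closed_zero)

end

definition supported :: "('n::finite \<Rightarrow> 'n \<Rightarrow> bool) \<Rightarrow> 'n mat_ring \<Rightarrow> bool" where
  "supported R X \<longleftrightarrow> (\<forall>a b. entry X a b \<noteq> 0 \<longrightarrow> R a b)"

lemma supported_zero: "supported R 0"
  by (simp add: supported_def)

lemma supported_add: "supported R X \<Longrightarrow> supported R Y \<Longrightarrow> supported R (X + Y)"
  unfolding supported_def by (metis add.right_neutral add_0 entry_add)

lemma supported_uminus: "supported R X \<Longrightarrow> supported R (- X)"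
  by (simp add: supported_def)

lemma supported_diff: "supported R X \<Longrightarrow> supported R Y \<Longrightarrow> supported R (X - Y)"
  by (metis supported_add supported_uminus diff_conv_add_uminus)

lemma supported_sum: "(\<And>x. x \<in> A \<Longrightarrow> supported R (f x)) \<Longrightarrow> supported R (sum f A)"
  by (induction A rule: infinite_finite_induct) (auto intro: supported_zero supported_add)

lemma supported_mult:
  assumes "supported R X" "supported R' Y" and "\<And>a c b. R a c \<Longrightarrow> R' c b \<Longrightarrow> R'' a b"
  shows "supported R'' (X * Y)"
  unfolding supported_def
proof (intro allI impI)
  fix a b assume "entry (X * Y) a b \<noteq> 0"
  then obtain c where "entry X a c \<noteq> 0" "entry Y c b \<noteq> 0"
    unfolding entry_mult by (metis (no_types, lifting) mult_not_zero sum.neutral)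
  then show "R'' a b" using assms unfolding supported_def by blast
qed

lemma subring_pred_supported:
  assumes "\<And>a. R a a" and "\<And>a c b. R a c \<Longrightarrow> R c b \<Longrightarrow> R a b"
  shows "subring_pred (supported R)"
proof
  show "supported R 1" using assms(1) by (simp add: supported_def entry_one)
  show "supported R x \<Longrightarrow> supported R y \<Longrightarrow> supported R (x * y)" for x y
    by (rule supported_mult[OF _ _ assms(2)])
qed (simp_all add: supported_zero supported_add supported_uminus)

definition restrict_entries :: "('n::finite \<Rightarrow> 'n \<Rightarrow> bool) \<Rightarrow> 'n mat_ring \<Rightarrow> 'n mat_ring" where
  "restrict_entries R = masked (\<lambda>a b. if R a b then 1 else 0)"

lemma entry_restrict_entries [simp]:
  "entry (restrict_entries R X) a b = (if R a b then entry X a b else 0)"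
  by (simp add: restrict_entries_def)

lemma supported_restrict_entries: "supported R (restrict_entries R X)"
  by (simp add: supported_def)

lemma restrict_entries_id: "supported R X \<Longrightarrow> restrict_entries R X = X"
  by (rule mat_ring_eqI) (auto simp: supported_def)

lemma restrict_entries_eq_0: "supported (\<lambda>a b. \<not> R a b) X \<Longrightarrow> restrict_entries R X = 0"
  by (rule mat_ring_eqI) (auto simp: supported_def)

lemma restrict_entries_restrict_entries:
  "(\<And>a b. R a b \<Longrightarrow> R' a b) \<Longrightarrow> restrict_entries R (restrict_entries R' X) = restrict_entries R X"
  by (rule mat_ring_eqI) auto

lemma restrict_entries_add: "restrict_entries R (X + Y) = restrict_entries R X + restrict_entries R Y"
  by (simp add: restrict_entries_def masked_add)

lemma restrict_entries_diff: "restrict_entries R (X - Y) = restrict_entries R X - restrict_entries R Y"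
  by (simp add: restrict_entries_def masked_diff)

lemma restrict_entries_sum: "restrict_entries R (sum f A) = (\<Sum>x\<in>A. restrict_entries R (f x))"
  by (induction A rule: infinite_finite_induct)
    (auto simp: restrict_entries_add restrict_entries_eq_0 supported_zero)

lemma restrict_entries_mult_left:
  assumes E: "equivp E" and X: "supported E X"
  shows "restrict_entries E (X * Y) = X * restrict_entries E Y"
proof (rule mat_ring_eqI)
  fix a b
  have "entry X a c * entry Y c b = entry X a c * (if E c b then entry Y c b else 0)"
    if "E a b" for c
  proof (cases "entry X a c = 0")
    case False
    then have "E a c" using X by (simp add: supported_def)
    then have "E c b" using that E by (meson equivp_symp equivp_transp)
    then show ?thesis by simp
  qed simp
  moreover have "entry X a c * (if E c b then entry Y c b else 0) = 0" if "\<not> E a b" for c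
  proof (cases "entry X a c = 0")
    case False
    then have "E a c" using X by (simp add: supported_def)
    then have "\<not> E c b" using that E by (meson equivp_transp)
    then show ?thesis by simp
  qed simp
  ultimately show "entry (restrict_entries E (X * Y)) a b = entry (X * restrict_entries E Y) a b"
    unfolding entry_mult entry_restrict_entries by (auto intro: sum.cong sum.neutral)
qed

lemma restrict_entries_mult_right:
  assumes E: "equivp E" and Y: "supported E Y"
  shows "restrict_entries E (X * Y) = restrict_entries E X * Y"
proof (rule mat_ring_eqI)
  fix a b
  have "entry X a c * entry Y c b = (if E a c then entry X a c else 0) * entry Y c b"
    if "E a b" for c
  proof (cases "entry Y c b = 0")
    case False
    then have "E c b" using Y by (simp add: supported_def)
    then have "E a c" using that E by (meson equivp_symp equivp_transp)
    then show ?thesis by simp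
  qed simp
  moreover have "(if E a c then entry X a c else 0) * entry Y c b = 0" if "\<not> E a b" for c
  proof (cases "entry Y c b = 0")
    case False
    then have "E c b" using Y by (simp add: supported_def)
    then have "\<not> E a c" using that E by (meson equivp_transp)
    then show ?thesis by simp
  qed simp
  ultimately show "entry (restrict_entries E (X * Y)) a b = entry (restrict_entries E X * Y) a b"
    unfolding entry_mult entry_restrict_entries by (auto intro: sum.cong sum.neutral)
qed

section \<open>Blocks of the eigenspace decompositions\<close>

locale ordered_blocks =
  fixes k :: nat and T :: "nat \<Rightarrow> complex^'n::finite^'n"
    and ord :: "nat \<Rightarrow> (complex list \<times> complex list) set"
  assumes k: "k > 1"
    and T_cartan: "\<forall>i\<in>{1..k-1}. is_diag (T i)"
    and ord_total: "\<forall>i\<le>k-2. strict_linear_order_on (J k T i) (ord i)"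
    and ord_compat: "\<forall>i. i + 1 \<le> k - 2 \<longrightarrow> (\<forall>p\<in>J k T i. \<forall>q\<in>J k T i.
                       (pi_J 1 p, pi_J 1 q) \<in> ord (i + 1) \<longrightarrow> (p, q) \<in> ord i)"
begin

abbreviation lbl :: "nat \<Rightarrow> 'n \<Rightarrow> complex list" where
  "lbl i a \<equiv> key k T i a"

definition sep :: "nat \<Rightarrow> 'n \<Rightarrow> 'n \<Rightarrow> bool" where
  "sep i a b \<longleftrightarrow> lbl i a \<noteq> lbl i b"

definition prec :: "'n \<Rightarrow> 'n \<Rightarrow> bool" where
  "prec a b \<longleftrightarrow> ltJ k ord 0 (lbl 0 a) (lbl 0 b)"

lemma lbl_drop: "i \<le> j \<Longrightarrow> lbl j a = drop (j - i) (lbl i a)"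
  by (simp add: key_def drop_map)

lemma lbl_top: "k - 1 \<le> i \<Longrightarrow> lbl i a = []"
  by (simp add: key_def)

lemma lbl_in_J: "lbl i a \<in> J k T i"
  by (simp add: J_def)

lemma finite_J: "finite (J k T i)"
  by (simp add: J_def)

lemma sep_mono: "i \<le> j \<Longrightarrow> sep j a b \<Longrightarrow> sep i a b"
  unfolding sep_def by (metis lbl_drop)

lemma sep_top: "sep i a b \<Longrightarrow> i < k - 1"
  unfolding sep_def by (metis lbl_top not_less)

lemma sep_sym: "sep i a b \<longleftrightarrow> sep i b a"
  by (auto simp: sep_def)

lemma sep_irrefl [simp]: "\<not> sep i a a"
  by (simp add: sep_def)

lemma not_sep_trans: "\<not> sep i a b \<Longrightarrow> \<not> sep i b c \<Longrightarrow> \<not> sep i a c"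
  by (simp add: sep_def)

lemma equivp_not_sep: "equivp (\<lambda>a b. \<not> sep i a b)"
  by (rule equivpI) (auto simp: reflp_def symp_def transp_def sep_def)

lemma ord_strict_linear: "i \<le> k - 2 \<Longrightarrow> trans (ord i) \<and> irrefl (ord i) \<and> total_on (J k T i) (ord i)"
  using ord_total by (simp add: strict_linear_order_on_def)

lemma ltJ_Suc_imp:
  assumes "ltJ k ord (Suc i) (lbl (Suc i) a) (lbl (Suc i) b)"
  shows "ltJ k ord i (lbl i a) (lbl i b)"
proof -
  from assms have i: "Suc i < k - 1" and o: "(lbl (Suc i) a, lbl (Suc i) b) \<in> ord (Suc i)"
    by (auto simp: ltJ_def)
  have "pi_J 1 (lbl i a) = lbl (Suc i) a" "pi_J 1 (lbl i b) = lbl (Suc i) b"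
    using lbl_drop[of i "Suc i"] by (auto simp: pi_J_def)
  with o ord_compat i lbl_in_J show ?thesis
    by (auto simp: ltJ_def)
qed

lemma ltJ_mono: "ltJ k ord j (lbl j a) (lbl j b) \<Longrightarrow> i \<le> j \<Longrightarrow> ltJ k ord i (lbl i a) (lbl i b)"
proof (induction j)
  case (Suc j)
  then show ?case by (cases "i = Suc j") (auto intro: ltJ_Suc_imp)
qed simp

lemma prec_irrefl [simp]: "\<not> prec a a"
  using ord_strict_linear[of 0] by (auto simp: prec_def ltJ_def irrefl_def)

lemma prec_trans: "prec a b \<Longrightarrow> prec b c \<Longrightarrow> prec a c"
proof -
  assume "prec a b" "prec b c"
  moreover have "trans (ord 0)" using ord_strict_linear[of 0] by simp
  ultimately show ?thesis unfolding prec_def ltJ_def by (meson transD)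
qed

lemma prec_asym: "prec a b \<Longrightarrow> \<not> prec b a"
  using prec_trans prec_irrefl by blast

lemma prec_lbl_cong: "lbl 0 a = lbl 0 a' \<Longrightarrow> lbl 0 b = lbl 0 b' \<Longrightarrow> prec a b = prec a' b'"
  by (simp add: prec_def)

lemma prec_total: "sep 0 a b \<Longrightarrow> prec a b \<or> prec b a"
proof -
  assume ab: "sep 0 a b"
  then have "0 < k - 1" using sep_top by blast
  moreover have "total_on (J k T 0) (ord 0)" using ord_strict_linear[of 0] by simp
  ultimately show ?thesis using ab lbl_in_J unfolding total_on_def sep_def prec_def ltJ_def
    by blast
qed

text \<open>Thanks to the compatibility of the orders, the order on \<open>J\<^sub>i\<close> is the one induced by
  the order on \<open>J\<^sub>0\<close>.\<close>

lemma ltJ_lbl_iff: "ltJ k ord i (lbl i a) (lbl i b) \<longleftrightarrow> prec a b \<and> sep i a b"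
proof
  assume h: "ltJ k ord i (lbl i a) (lbl i b)"
  then have "prec a b" using ltJ_mono[OF h, of 0] by (simp add: prec_def)
  moreover have "sep i a b" using h ord_strict_linear[of i] by (auto simp: ltJ_def sep_def irrefl_def)
  ultimately show "prec a b \<and> sep i a b" by simp
next
  assume h: "prec a b \<and> sep i a b"
  then have i: "i < k - 1" using sep_top by blast
  have "(lbl i a, lbl i b) \<in> ord i \<or> (lbl i b, lbl i a) \<in> ord i"
    using ord_strict_linear[of i] i h lbl_in_J unfolding total_on_def sep_def by simp
  moreover have "(lbl i b, lbl i a) \<notin> ord i"
  proof
    assume "(lbl i b, lbl i a) \<in> ord i"
    then have "prec b a" using ltJ_mono[of i b a 0] i by (simp add: ltJ_def prec_def)
    then show False using h prec_asym by blast
  qed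
  ultimately show "ltJ k ord i (lbl i a) (lbl i b)" using i by (simp add: ltJ_def)
qed

lemma prec_sep_right:
  assumes "prec a c" "sep j a c" "\<not> sep j c b" shows "prec a b"
proof -
  have "ltJ k ord j (lbl j a) (lbl j c)" using assms ltJ_lbl_iff by simp
  then have "ltJ k ord j (lbl j a) (lbl j b)" using assms(3) by (simp add: sep_def)
  then show ?thesis using ltJ_lbl_iff by simp
qed

lemma prec_sep_left:
  assumes "prec a c" "sep i a c" "\<not> sep i a b" shows "prec b c"
proof -
  have "ltJ k ord i (lbl i a) (lbl i c)" using assms ltJ_lbl_iff by simp
  then have "ltJ k ord i (lbl i b) (lbl i c)" using assms(3) by (simp add: sep_def)
  then show ?thesis using ltJ_lbl_iff by simp
qed

lemma not_prec_trans:
  assumes "\<not> prec a c" "\<not> prec c b" shows "\<not> prec a b"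
proof
  assume ab: "prec a b"
  show False
  proof (cases "sep 0 a c")
    case True
    then have "prec c a" using prec_total assms(1) by blast
    then show False using prec_trans ab assms(2) by blast
  next
    case False
    then show False using ab assms(2) prec_lbl_cong[of a c b b] by (simp add: sep_def)
  qed
qed

definition dT_entry :: "nat \<Rightarrow> 'n \<Rightarrow> complex" where
  "dT_entry i a = - of_nat i * T i $ a $ a"

definition dT_elem :: "nat \<Rightarrow> 'n mat_ring" where
  "dT_elem i = ring_of (dT T i)"

lemma entry_dT_elem:
  assumes "1 \<le> i" "i < k" shows "entry (dT_elem i) a b = (if a = b then dT_entry i a else 0)"
proof -
  have "dT T i $ a $ b = - (complex_of_real (real i) * T i $ a $ b)"
    unfolding dT_def vector_uminus_component vector_scaleR_component by (simp add: scaleR_conv_of_real)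
  then show ?thesis using T_cartan assms by (auto simp: dT_elem_def dT_entry_def is_diag_def)
qed

lemma lbl_pred_level: "1 \<le> i \<Longrightarrow> i < k \<Longrightarrow> lbl (i - 1) a = T i $ a $ a # lbl i a"
  by (cases i) (simp_all add: key_def upt_conv_Cons)

lemma dT_entry_eq: "1 \<le> i \<Longrightarrow> i < k \<Longrightarrow> \<not> sep (i - 1) a b \<Longrightarrow> dT_entry i a = dT_entry i b"
  using lbl_pred_level[of i a] lbl_pred_level[of i b] by (auto simp: sep_def dT_entry_def)

lemma dT_entry_neq: "1 \<le> i \<Longrightarrow> i < k \<Longrightarrow> \<not> sep i a b \<Longrightarrow> sep (i - 1) a b \<Longrightarrow> dT_entry i a \<noteq> dT_entry i b"
  using lbl_pred_level[of i a] lbl_pred_level[of i b] by (auto simp: sep_def dT_entry_def)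

lemma entry_dT_elem_commutator:
  assumes "1 \<le> i" "i < k"
  shows "entry (dT_elem i * X - X * dT_elem i) a b = (dT_entry i a - dT_entry i b) * entry X a b"
proof -
  have "entry (dT_elem i * X) a b = (\<Sum>c\<in>UNIV. if c = a then dT_entry i a * entry X a b else 0)"
    unfolding entry_mult by (rule sum.cong) (auto simp: entry_dT_elem[OF assms])
  moreover have "entry (X * dT_elem i) a b = (\<Sum>c\<in>UNIV. if c = b then entry X a b * dT_entry i b else 0)"
    unfolding entry_mult by (rule sum.cong) (auto simp: entry_dT_elem[OF assms])
  ultimately show ?thesis by (simp add: algebra_simps)
qed

lemma dT_elem_commute:
  assumes "1 \<le> i" "i < k" "m \<le> i - 1" "supported (\<lambda>a b. \<not> sep m a b) X"
  shows "dT_elem i * X = X * dT_elem i"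
proof -
  have "(dT_entry i a - dT_entry i b) * entry X a b = 0" for a b
    using assms dT_entry_eq[of i a b] sep_mono[of m "i - 1" a b] by (auto simp: supported_def)
  then have "entry (dT_elem i * X - X * dT_elem i) a b = 0" for a b
    by (simp only: entry_dT_elem_commutator[OF assms(1,2)])
  then show ?thesis by (intro mat_ring_eqI) simp
qed

end

section \<open>Invariant subspaces\<close>

definition preserves :: "(complex^'n::finite) set \<Rightarrow> 'n mat_ring \<Rightarrow> bool" where
  "preserves S X \<longleftrightarrow> (\<forall>v\<in>S. mat_of X *v v \<in> S)"

lemma preserves_ring_of: "preserves S (ring_of A) \<longleftrightarrow> invariant_under S A"
  by (simp add: preserves_def invariant_under_def)

lemma subring_pred_preserves:
  assumes S: "vec.subspace S" shows "subring_pred (preserves S)"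
proof
  show "preserves S 0" using S by (simp add: preserves_def mat_of_zero vec.subspace_0)
  show "preserves S 1" by (simp add: preserves_def mat_of_one)
  show "preserves S (X + Y)" if "preserves S X" "preserves S Y" for X Y
    using S that by (simp add: preserves_def mat_of_add matrix_vector_mult_add_rdistrib vec.subspace_add)
  show "preserves S (- X)" if "preserves S X" for X
  proof -
    have "mat_of (- X) *v v = - (mat_of X *v v)" for v
      by (simp add: mat_of_uminus vec_eq_iff matrix_vector_mult_def sum_negf)
    then show ?thesis using S that by (simp add: preserves_def vec.subspace_neg)
  qed
  show "preserves S (X * Y)" if "preserves S X" "preserves S Y" for X Y
    using that by (simp add: preserves_def mat_of_mult matrix_vector_mul_assoc[symmetric])
qed

text \<open>The projection onto an eigenspace of a diagonal operator is a polynomial in it.\<close>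

lemma preserves_diagonal_eigencomponent:
  assumes S: "vec.subspace S" and D: "preserves S D"
    and diag: "\<And>a b. a \<noteq> b \<Longrightarrow> entry D a b = 0" and w: "w \<in> S"
  shows "(\<chi> a. if entry D a a = c then w $ a else 0) \<in> S"
proof -
  have shift: "(\<chi> a. (entry D a a - e) * u $ a) \<in> S" if "u \<in> S" for u e
  proof -
    have "(mat_of D *v u) $ a = entry D a a * u $ a" for a
      unfolding mat_of_mult_vec_nth by (subst sum.remove[of _ a]) (auto simp: diag intro: sum.neutral)
    then have "(\<chi> a. (entry D a a - e) * u $ a) = mat_of D *v u - e *s u"
      by (simp add: vec_eq_iff algebra_simps)
    then show ?thesis using S D that by (simp add: preserves_def vec.subspace_diff vec.subspace_scale)
  qed
  have prod: "(\<chi> a. (\<Prod>e\<in>E. entry D a a - e) * w $ a) \<in> S" if "finite E" for E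
    using that
  proof (induction E rule: finite_induct)
    case empty then show ?case using w by (simp add: vec_lambda_eta)
  next
    case (insert e E)
    then show ?case using shift[OF insert.IH, of e] by (simp add: mult.assoc)
  qed
  let ?E = "(\<lambda>a. entry D a a) ` UNIV - {c}"
  have "inverse (\<Prod>e\<in>?E. c - e) *s (\<chi> a. (\<Prod>e\<in>?E. entry D a a - e) * w $ a) \<in> S"
    using prod[of ?E] S vec.subspace_scale by simp
  moreover have "inverse (\<Prod>e\<in>?E. c - e) *s (\<chi> a. (\<Prod>e\<in>?E. entry D a a - e) * w $ a)
      = (\<chi> a. if entry D a a = c then w $ a else 0)"
  proof -
    have "(\<Prod>e\<in>?E. c - e) \<noteq> 0" by (simp add: prod_zero_iff)
    moreover have "(\<Prod>e\<in>?E. entry D a a - e) = 0" if "entry D a a \<noteq> c" for a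
      using that by (simp add: prod_zero_iff)
    ultimately show ?thesis by (auto simp: vec_eq_iff)
  qed
  ultimately show ?thesis by simp
qed

context ordered_blocks
begin

definition proj :: "nat \<Rightarrow> complex list \<Rightarrow> complex^'n \<Rightarrow> complex^'n" where
  "proj m p v = (\<chi> a. if lbl m a = p then v $ a else 0)"

definition graded :: "nat \<Rightarrow> (complex^'n) set \<Rightarrow> bool" where
  "graded m S \<longleftrightarrow> (\<forall>v\<in>S. \<forall>p. proj m p v \<in> S)"

definition block_const :: "nat \<Rightarrow> ('n \<Rightarrow> 'n \<Rightarrow> complex) \<Rightarrow> bool" where
  "block_const m w \<longleftrightarrow> (\<forall>a b a' b'. lbl m a = lbl m a' \<longrightarrow> lbl m b = lbl m b' \<longrightarrow> w a b = w a' b')"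

lemma block_const_sep: "m \<le> i \<Longrightarrow> block_const m (\<lambda>a b. f (sep i a b))"
  using lbl_drop[of m i] by (simp add: block_const_def sep_def)

lemma block_const_u_plus:
  "block_const 0 (\<lambda>a b. if prec a b \<and> sep i a b then c else 0)"
  unfolding block_const_def
proof (intro allI impI)
  fix a b a' b' assume h: "lbl 0 a = lbl 0 a'" "lbl 0 b = lbl 0 b'"
  have "prec a b = prec a' b'" using prec_lbl_cong h by blast
  moreover have "sep i a b = sep i a' b'" using h lbl_drop[of 0 i] by (simp add: sep_def)
  ultimately show "(if prec a b \<and> sep i a b then c else 0) = (if prec a' b' \<and> sep i a' b' then c else 0)"
    by simp
qed

lemma masked_mult_vec:
  assumes w: "block_const m w"
  defines "W \<equiv> \<lambda>q p. w (SOME a. lbl m a = q) (SOME b. lbl m b = p)"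
  shows "mat_of (masked w X) *v v = (\<Sum>p\<in>J k T m. \<Sum>q\<in>J k T m. W q p *s proj m q (mat_of X *v proj m p v))"
proof (rule vec_eq_iff[THEN iffD2], rule allI)
  fix a
  have Wlbl: "W (lbl m a) (lbl m b) = w a b" for b
  proof -
    have "lbl m (SOME a'. lbl m a' = lbl m a) = lbl m a" "lbl m (SOME b'. lbl m b' = lbl m b) = lbl m b"
      by (rule someI, simp)+
    then show ?thesis using w unfolding W_def block_const_def by metis
  qed
  have "(\<Sum>p\<in>J k T m. \<Sum>q\<in>J k T m. W q p *s proj m q (mat_of X *v proj m p v)) $ a
      = (\<Sum>p\<in>J k T m. \<Sum>q\<in>J k T m. if q = lbl m a then W q p * (mat_of X *v proj m p v) $ a else 0)"
    by (auto simp: proj_def intro!: sum.cong)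
  also have "\<dots> = (\<Sum>p\<in>J k T m. W (lbl m a) p * (mat_of X *v proj m p v) $ a)"
    by (simp add: lbl_in_J finite_J)
  also have "\<dots> = (\<Sum>p\<in>J k T m. \<Sum>b\<in>UNIV. if p = lbl m b then W (lbl m a) p * entry X a b * v $ b else 0)"
    by (simp add: mat_of_mult_vec_nth proj_def sum_distrib_left mult.assoc if_distrib eq_commute cong: if_cong)
  also have "\<dots> = (\<Sum>b\<in>UNIV. \<Sum>p\<in>J k T m. if p = lbl m b then W (lbl m a) p * entry X a b * v $ b else 0)"
    by (rule sum.swap)
  also have "\<dots> = (mat_of (masked w X) *v v) $ a"
    by (simp add: finite_J lbl_in_J mat_of_mult_vec_nth Wlbl)
  finally show "(mat_of (masked w X) *v v) $ a
      = (\<Sum>p\<in>J k T m. \<Sum>q\<in>J k T m. W q p *s proj m q (mat_of X *v proj m p v)) $ a" ..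
qed

lemma preserves_masked:
  assumes S: "vec.subspace S" and "graded m S" and "preserves S X" and w: "block_const m w"
  shows "preserves S (masked w X)"
  unfolding preserves_def masked_mult_vec[OF w]
  using assms unfolding graded_def preserves_def
  by (intro ballI vec.subspace_sum[OF S] vec.subspace_scale[OF S]) auto

lemma preserves_restrict_entries:
  "vec.subspace S \<Longrightarrow> graded m S \<Longrightarrow> preserves S X \<Longrightarrow> block_const m (\<lambda>a b. if R a b then 1 else 0)
    \<Longrightarrow> preserves S (restrict_entries R X)"
  unfolding restrict_entries_def by (rule preserves_masked)

lemma graded_top:
  assumes S: "vec.subspace S" shows "graded (k - 1) S"
  unfolding graded_def
proof (intro ballI allI)
  fix v p assume v: "v \<in> S"
  show "proj (k - 1) p v \<in> S"
  proof (cases "p = []")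
    case True
    then have "proj (k - 1) p v = v" by (simp add: proj_def lbl_top vec_eq_iff)
    then show ?thesis using v by simp
  next
    case False
    then have "proj (k - 1) p v = 0" by (simp add: proj_def lbl_top vec_eq_iff)
    then show ?thesis using S vec.subspace_0 by simp
  qed
qed

text \<open>The pieces at level \<open>m - 1\<close> are the eigenspaces of \<open>T\<^sub>m\<close> inside the pieces at level \<open>m\<close>.\<close>

lemma graded_pred:
  assumes S: "vec.subspace S" and gr: "graded m S" and m: "1 \<le> m" "m < k"
    and D: "preserves S (dT_elem m)"
  shows "graded (m - 1) S"
  unfolding graded_def
proof (intro ballI allI)
  fix v p assume v: "v \<in> S"
  show "proj (m - 1) p v \<in> S"
  proof (cases p)
    case Nil
    then have "proj (m - 1) p v = 0" using lbl_pred_level[OF m] by (simp add: proj_def vec_eq_iff)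
    then show ?thesis using S vec.subspace_0 by simp
  next
    case (Cons c p')
    have pv: "proj m p' v \<in> S" using gr v by (simp add: graded_def)
    have "(\<chi> a. if entry (dT_elem m) a a = - of_nat m * c then proj m p' v $ a else 0) \<in> S"
      by (rule preserves_diagonal_eigencomponent[OF S D _ pv]) (simp add: entry_dT_elem[OF m])
    moreover have "(\<chi> a. if entry (dT_elem m) a a = - of_nat m * c then proj m p' v $ a else 0)
        = proj (m - 1) p v"
      using m lbl_pred_level[OF m] by (auto simp: vec_eq_iff proj_def Cons entry_dT_elem dT_entry_def)
    ultimately show ?thesis by simp
  qed
qed

lemma preserves_dT_elem:
  assumes S: "vec.subspace S" and "graded m S" "m \<le> i - 1" "1 \<le> i" "i < k"
  shows "preserves S (dT_elem i)"
proof -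
  have "dT_elem i = masked (\<lambda>a b. if sep m a b then 0 else dT_entry i a) 1"
    by (rule mat_ring_eqI) (auto simp: entry_dT_elem[OF assms(4,5)] entry_one)
  moreover have "block_const m (\<lambda>a b. if sep m a b then 0 else dT_entry i a)"
    unfolding block_const_def
  proof (intro allI impI)
    fix a b a' b' assume h: "lbl m a = lbl m a'" "lbl m b = lbl m b'"
    then have "\<not> sep (i - 1) a a'" using sep_mono[OF assms(3)] by (auto simp: sep_def)
    then have "dT_entry i a = dT_entry i a'" by (rule dT_entry_eq[OF assms(4,5)])
    then show "(if sep m a b then 0 else dT_entry i a) = (if sep m a' b' then 0 else dT_entry i a')"
      using h by (simp add: sep_def)
  qed
  moreover have "preserves S 1" by (rule subring_pred.closed_one[OF subring_pred_preserves[OF S]])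
  ultimately show ?thesis using preserves_masked[OF S assms(2)] by simp
qed

abbreviation in_u_plus :: "nat \<Rightarrow> 'n mat_ring \<Rightarrow> bool" where
  "in_u_plus i \<equiv> supported (\<lambda>a b. prec a b \<and> sep i a b)"

abbreviation in_b_minus :: "'n mat_ring \<Rightarrow> bool" where
  "in_b_minus \<equiv> supported (\<lambda>a b. \<not> prec a b)"

abbreviation level_diag :: "nat \<Rightarrow> 'n mat_ring \<Rightarrow> bool" where
  "level_diag m \<equiv> supported (\<lambda>a b. \<not> sep m a b)"

definition level_part :: "nat \<Rightarrow> 'n mat_ring \<Rightarrow> 'n mat_ring" where
  "level_part m = restrict_entries (\<lambda>a b. \<not> sep m a b)"

lemma subring_pred_level_diag: "subring_pred (level_diag m)"
  by (rule subring_pred_supported) (auto dest: not_sep_trans)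

lemma subring_pred_in_b_minus: "subring_pred in_b_minus"
  by (rule subring_pred_supported) (auto dest: not_prec_trans)

lemma level_diag_level_part: "level_diag m (level_part m X)"
  by (simp add: level_part_def supported_restrict_entries)

lemma level_diag_mono: "m' \<le> m \<Longrightarrow> level_diag m' X \<Longrightarrow> level_diag m X"
  by (auto simp: supported_def dest: sep_mono)

lemma level_part_level_part: "m' \<le> m \<Longrightarrow> level_part m' (level_part m X) = level_part m' X"
  unfolding level_part_def by (rule restrict_entries_restrict_entries) (auto dest: sep_mono)

lemma level_part_top: "level_part (k - 1) X = X"
  unfolding level_part_def by (rule restrict_entries_id) (auto simp: supported_def dest: sep_top)

lemma in_b_minus_level_part: "in_b_minus X \<Longrightarrow> in_b_minus (level_part m X)"
  by (simp add: supported_def level_part_def)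

lemma level_diag_dT_elem: "1 \<le> i \<Longrightarrow> i < k \<Longrightarrow> level_diag m (dT_elem i)"
  by (auto simp: supported_def entry_dT_elem)

lemma level_part_lmult:
  "(\<And>j. level_diag m (x j)) \<Longrightarrow> level_part m (lmult K x y i) = lmult K x (\<lambda>i. level_part m (y i)) i"
  unfolding lmult_def level_part_def restrict_entries_sum
  by (intro sum.cong) (simp_all add: if_distrib restrict_entries_mult_left[OF equivp_not_sep]
      restrict_entries_eq_0 supported_zero)

lemma level_part_rmult:
  "(\<And>j. level_diag m (y j)) \<Longrightarrow> level_part m (rmult K x y i) = rmult K (\<lambda>i. level_part m (x i)) y i"
  unfolding rmult_def level_part_def restrict_entries_sum
  by (intro sum.cong) (simp_all add: if_distrib restrict_entries_mult_right[OF equivp_not_sep]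
      restrict_entries_eq_0 supported_zero)

lemma level_part_coadjoint:
  assumes "\<And>j. level_diag m (x j)" "\<And>j. level_diag m (y j)"
  shows "level_part m (rmult K (lmult K x z) y i) = rmult K (lmult K x (\<lambda>i. level_part m (z i))) y i"
  unfolding level_part_rmult[OF assms(2)] by (rule rmult_cong) (auto simp: level_part_lmult[OF assms(1)])

end

section \<open>The factorisation \<open>b = b\<^sub>- b\<^sub>+\<close>\<close>

locale factored = ordered_blocks k T ord
  for k :: nat and T :: "nat \<Rightarrow> complex^'n::finite^'n" and ord +
  fixes bm bp :: "nat \<Rightarrow> 'n mat_ring"
  assumes bm0: "bm 0 = 1" and bp0: "bp 0 = 1"
    and bm_u_minus: "\<And>i. 1 \<le> i \<Longrightarrow> i < k \<Longrightarrow> supported (\<lambda>a b. prec b a \<and> sep i a b) (bm i)"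
    and bp_p_plus: "\<And>i. 1 \<le> i \<Longrightarrow> i < k \<Longrightarrow> supported (\<lambda>a b. \<not> sep i a b \<or> prec a b) (bp i)"
begin

text \<open>\<open>gamma\<close> is the coadjoint orbit point \<open>Ad\<^sup>*\<^sub>b\<^sub>+ dT\<close>, so that \<open>B = Ad\<^sup>*\<^sub>b\<^sub>- gamma\<close>.\<close>

definition gamma :: "nat \<Rightarrow> 'n mat_ring" where
  "gamma = rmult k (lmult k bp dT_elem) (series_inv bp)"

lemma gamma_rmult_bp: "i < k \<Longrightarrow> rmult k gamma bp i = lmult k bp dT_elem i"
  unfolding gamma_def by (simp add: rmult_rmult series_mult_inv_left bp0 rmult_one)

lemma commutator_in_u_plus:
  assumes "1 \<le> j" "j < k" "1 \<le> i" "i + j < k"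
  shows "in_u_plus i (dT_elem (i + j) * bp j - bp j * dT_elem (i + j))"
  unfolding supported_def
proof (intro allI impI)
  fix a b assume nz: "entry (dT_elem (i + j) * bp j - bp j * dT_elem (i + j)) a b \<noteq> 0"
  have "entry (dT_elem (i + j) * bp j - bp j * dT_elem (i + j)) a b
      = (dT_entry (i + j) a - dT_entry (i + j) b) * entry (bp j) a b"
    by (rule entry_dT_elem_commutator) (use assms in auto)
  then have bp: "entry (bp j) a b \<noteq> 0" and d: "dT_entry (i + j) a \<noteq> dT_entry (i + j) b"
    using nz by auto
  have "sep (i + j - 1) a b" using d dT_entry_eq[of "i + j" a b] assms by auto
  then have "sep i a b" "sep j a b" using sep_mono[of _ "i + j - 1" a b] assms by auto
  moreover have "prec a b" using bp_p_plus[OF assms(1,2)] bp \<open>sep j a b\<close> by (auto simp: supported_def)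
  ultimately show "prec a b \<and> sep i a b" by simp
qed

lemma in_u_plus_mult_bp:
  assumes "1 \<le> j" "j < k" "in_u_plus (i + j) X"
  shows "in_u_plus i (X * bp j)"
proof (rule supported_mult[OF assms(3) bp_p_plus[OF assms(1,2)]])
  fix a c b assume ac: "prec a c \<and> sep (i + j) a c" and cb: "\<not> sep j c b \<or> prec c b"
  have aci: "sep i a c" and acj: "sep j a c" using ac sep_mono[of _ "i + j" a c] by auto
  from cb show "prec a b \<and> sep i a b"
  proof
    assume cb: "\<not> sep j c b"
    have "prec a b" using prec_sep_right ac acj cb by blast
    moreover have "sep i a b"
    proof (cases "i \<le> j")
      case True
      then show ?thesis using acj cb not_sep_trans[of j a b c] sep_sym sep_mono by blast
    next
      case False
      then have "\<not> sep i c b" using cb sep_mono[of j i c b] by auto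
      then show ?thesis using aci not_sep_trans[of i a b c] sep_sym by blast
    qed
    ultimately show ?thesis by simp
  next
    assume cb: "prec c b"
    have "prec a b" using prec_trans ac cb by blast
    moreover have "sep i a b" using prec_sep_left[of a c i b] ac aci cb prec_asym by blast
    ultimately show ?thesis by simp
  qed
qed

text \<open>By descending induction on \<open>i\<close>, comparing the coefficients of \<open>gamma b\<^sub>+ = b\<^sub>+ dT\<close>.\<close>

lemma gamma_minus_dT_in_u_plus: "1 \<le> i \<Longrightarrow> i < k \<Longrightarrow> in_u_plus i (gamma i - dT_elem i)"
proof (induction "k - i" arbitrary: i rule: less_induct)
  case less
  let ?N = "\<lambda>i. gamma i - dT_elem i"
  have "gamma i + (\<Sum>j\<in>{1..<k}. if i + j < k then gamma (i + j) * bp j else 0)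
      = dT_elem i + (\<Sum>j\<in>{1..<k}. if i + j < k then bp j * dT_elem (i + j) else 0)"
    using gamma_rmult_bp[OF less.prems(2)] by (simp add: rmult_split lmult_split less.prems bp0)
  then have "?N i = (\<Sum>j\<in>{1..<k}. if i + j < k then bp j * dT_elem (i + j) else 0)
      - (\<Sum>j\<in>{1..<k}. if i + j < k then gamma (i + j) * bp j else 0)"
    by (simp add: algebra_simps)
  also have "\<dots> = (\<Sum>j\<in>{1..<k}. if i + j < k then
      - (dT_elem (i + j) * bp j - bp j * dT_elem (i + j)) - ?N (i + j) * bp j else 0)"
    unfolding sum_subtractf[symmetric] by (rule sum.cong) (auto simp: algebra_simps)
  also have "in_u_plus i \<dots>"
  proof (rule supported_sum)
    fix j assume j: "j \<in> {1..<k}"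
    show "in_u_plus i (if i + j < k then - (dT_elem (i + j) * bp j - bp j * dT_elem (i + j))
        - ?N (i + j) * bp j else 0)"
    proof (cases "i + j < k")
      case True
      have "in_u_plus (i + j) (?N (i + j))" using less.hyps[of "i + j"] True j less.prems by auto
      then have N: "in_u_plus i (?N (i + j) * bp j)" using in_u_plus_mult_bp j by auto
      have C: "in_u_plus i (dT_elem (i + j) * bp j - bp j * dT_elem (i + j))"
        using commutator_in_u_plus j True less.prems by auto
      have "in_u_plus i (- (dT_elem (i + j) * bp j - bp j * dT_elem (i + j))
          - ?N (i + j) * bp j)"
        by (rule supported_diff[OF supported_uminus[OF C] N])
      then show ?thesis using True by simp
    qed (simp add: supported_zero)
  qed
  finally show ?case .
qed

lemma in_b_minus_bm: "j < k \<Longrightarrow> in_b_minus (bm j)"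
  using bm_u_minus[of j] prec_asym by (cases "j = 0") (auto simp: bm0 supported_def entry_one)

end

section \<open>Descent through the levels\<close>

context factored
begin

interpretation level_diag: subring_pred "level_diag m" for m
  by (rule subring_pred_level_diag)

interpretation in_b_minus: subring_pred in_b_minus
  by (rule subring_pred_in_b_minus)

text \<open>The descent from level \<open>k - 1\<close> to level \<open>0\<close> works with the block-diagonal parts of
  \<open>b\<^sub>-\<close> and \<open>gamma\<close> for the decomposition \<open>\<complex>\<^sup>n = \<Oplus>\<^sub>p V\<^sup>(\<^sup>m\<^sup>)\<^sub>p\<close>; \<open>rho (k - 1)\<close> is \<open>B\<close>.\<close>

definition bm_part :: "nat \<Rightarrow> nat \<Rightarrow> 'n mat_ring" where
  "bm_part m j = level_part m (bm j)"

definition gamma_part :: "nat \<Rightarrow> nat \<Rightarrow> 'n mat_ring" where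
  "gamma_part m i = level_part m (gamma i)"

definition rho :: "nat \<Rightarrow> nat \<Rightarrow> 'n mat_ring" where
  "rho m = rmult k (lmult k (bm_part m) (gamma_part m)) (series_inv (bm_part m))"

definition sigma :: "nat \<Rightarrow> nat \<Rightarrow> 'n mat_ring" where
  "sigma m = rmult k (lmult k (bm_part (m - 1)) (gamma_part m)) (series_inv (bm_part (m - 1)))"

definition ratio :: "nat \<Rightarrow> nat \<Rightarrow> 'n mat_ring" where
  "ratio m = series_mult (bm_part m) (series_inv (bm_part (m - 1)))"

definition critical :: "nat \<Rightarrow> 'n \<Rightarrow> 'n \<Rightarrow> bool" where
  "critical m a b \<longleftrightarrow> prec b a \<and> sep (m - 1) a b \<and> \<not> sep m a b"

lemma level_part_one: "level_part m 1 = 1"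
  by (simp add: level_part_def restrict_entries_id level_diag.closed_one)

lemma bm_part_0 [simp]: "bm_part m 0 = 1"
  by (simp add: bm_part_def bm0 level_part_one)

lemma level_diag_bm_part: "level_diag m (bm_part m j)"
  by (simp add: bm_part_def level_diag_level_part)

lemma level_diag_series_inv_bm_part: "level_diag m (series_inv (bm_part m) j)"
  by (rule level_diag.closed_series_inv) (simp add: level_diag_bm_part)

lemma in_b_minus_bm_part: "j < k \<Longrightarrow> in_b_minus (bm_part m j)"
  by (simp add: bm_part_def in_b_minus_level_part in_b_minus_bm)

lemma in_b_minus_series_inv_bm_part: "j < k \<Longrightarrow> in_b_minus (series_inv (bm_part m) j)"
  by (rule in_b_minus.closed_series_inv) (simp add: in_b_minus_bm_part)

lemma bm_part_top: "bm_part (k - 1) = bm"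
  by (rule ext) (simp add: bm_part_def level_part_top[simplified])

lemma bm_part_vanishes:
  assumes "1 \<le> j" "j < k" "m \<le> j" shows "bm_part m j = 0"
  unfolding bm_part_def level_part_def
proof (rule restrict_entries_eq_0)
  show "supported (\<lambda>a b. \<not> \<not> sep m a b) (bm j)"
    using bm_u_minus[OF assms(1,2)] sep_mono[OF assms(3)] unfolding supported_def by blast
qed

lemma gamma_part_eq_dT: "m \<le> i \<Longrightarrow> 1 \<le> i \<Longrightarrow> i < k \<Longrightarrow> gamma_part m i = dT_elem i"
proof -
  assume i: "m \<le> i" "1 \<le> i" "i < k"
  have "level_part m (gamma i - dT_elem i) = 0"
    unfolding level_part_def
  proof (rule restrict_entries_eq_0)
    show "supported (\<lambda>a b. \<not> \<not> sep m a b) (gamma i - dT_elem i)"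
      using gamma_minus_dT_in_u_plus[OF i(2,3)] sep_mono[OF i(1)] unfolding supported_def by blast
  qed
  moreover have "level_part m (dT_elem i) = dT_elem i"
    unfolding level_part_def by (rule restrict_entries_id) (rule level_diag_dT_elem[OF i(2,3)])
  ultimately show ?thesis
    by (simp add: gamma_part_def level_part_def restrict_entries_diff)
qed

text \<open>From degree \<open>m\<close> on, \<open>gamma_part m\<close> is \<open>dT\<close>, which commutes with everything block-diagonal at
  level \<open>m\<close> except in degree \<open>m\<close>, where \<open>dT\<^sub>m\<close> is the leading term.\<close>

lemma coadjoint_gamma_part_high:
  assumes m: "1 \<le> m" "m \<le> i" "i < k" and x: "\<And>j. level_diag m (x j)" and x0: "x 0 = 1"
  shows "rmult k (lmult k x (gamma_part m)) (series_inv x) i = dT_elem i"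
proof -
  define low where "low = (\<lambda>j. if j = m then dT_elem m else (0::'n mat_ring))"
  define high where "high = (\<lambda>j. if m < j \<and> j < k then dT_elem j else (0::'n mat_ring))"
  have "rmult k (lmult k x (gamma_part m)) (series_inv x) i
      = rmult k (lmult k x (\<lambda>j. low j + high j)) (series_inv x) i"
  proof (rule rmult_cong)
    have "gamma_part m j = low j + high j" if "i \<le> j" "j < k" for j
      using that m gamma_part_eq_dT[of m j] by (cases "j = m") (auto simp: low_def high_def)
    then show "\<forall>j. i \<le> j \<longrightarrow> j < k \<longrightarrow> lmult k x (gamma_part m) j = lmult k x (\<lambda>j. low j + high j) j"
      by (auto intro!: lmult_cong)
  qed simp
  also have "\<dots> = rmult k (lmult k x low) (series_inv x) i + rmult k (lmult k x high) (series_inv x) i"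
    by (rule coadjoint_add)
  also have "rmult k (lmult k x low) (series_inv x) i = (if i = m then dT_elem m else 0)"
    unfolding low_def using m x0 by (intro coadjoint_single) auto
  also have "rmult k (lmult k x high) (series_inv x) i = high i"
    using m x dT_elem_commute[of _ m] series_mult_inv_right[of x, OF x0]
    by (intro coadjoint_commuting) (auto simp: high_def)
  finally show ?thesis using m by (auto simp: high_def)
qed

lemma rho_high: "1 \<le> m \<Longrightarrow> m \<le> i \<Longrightarrow> i < k \<Longrightarrow> rho m i = dT_elem i"
  unfolding rho_def by (rule coadjoint_gamma_part_high) (auto simp: level_diag_bm_part)

lemma sigma_high: "1 \<le> m \<Longrightarrow> m \<le> i \<Longrightarrow> i < k \<Longrightarrow> sigma m i = dT_elem i"
  unfolding sigma_def
  by (rule coadjoint_gamma_part_high) (auto intro: level_diag_mono[OF _ level_diag_bm_part])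

lemma rho_top: "rho (k - 1) = rmult k (lmult k bm gamma) (series_inv bm)"
proof -
  have "gamma_part (k - 1) = gamma" by (rule ext) (simp add: gamma_part_def level_part_top[simplified])
  then show ?thesis by (simp add: rho_def bm_part_top[simplified])
qed

lemma rho_pred: "rho (m - 1) i = level_part (m - 1) (sigma m i)"
proof -
  have parts: "(\<lambda>j. level_part (m - 1) (gamma_part m j)) = gamma_part (m - 1)"
    by (rule ext) (simp add: gamma_part_def level_part_level_part)
  have "level_part (m - 1) (sigma m i) = rmult k (lmult k (bm_part (m - 1))
      (\<lambda>j. level_part (m - 1) (gamma_part m j))) (series_inv (bm_part (m - 1))) i"
    unfolding sigma_def
    by (rule level_part_coadjoint) (simp_all add: level_diag_bm_part level_diag_series_inv_bm_part)
  then show ?thesis unfolding parts rho_def by (rule sym)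
qed

lemma block_const_critical:
  assumes "1 \<le> m" "m < k"
  shows "block_const (m - 1) (\<lambda>a b. if critical m a b then c (dT_entry m a) (dT_entry m b) else 0)"
  unfolding block_const_def
proof (intro allI impI)
  fix a b a' b' assume h: "lbl (m - 1) a = lbl (m - 1) a'" "lbl (m - 1) b = lbl (m - 1) b'"
  have hm: "lbl m a = lbl m a'" "lbl m b = lbl m b'"
    using h sep_mono[of "m - 1" m, OF diff_le_self] unfolding sep_def by blast+
  have crit: "critical m x y \<longleftrightarrow> ltJ k ord (m - 1) (lbl (m - 1) y) (lbl (m - 1) x) \<and> lbl m x = lbl m y"
    for x y
    unfolding critical_def using ltJ_lbl_iff[of "m - 1" y x] by (auto simp: sep_def)
  have "critical m a b = critical m a' b'"
    unfolding crit h hm ..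
  moreover have "dT_entry m a = dT_entry m a'" "dT_entry m b = dT_entry m b'"
    using dT_entry_eq[OF assms, of a a'] dT_entry_eq[OF assms, of b b'] h by (simp_all add: sep_def)
  ultimately show "(if critical m a b then c (dT_entry m a) (dT_entry m b) else 0)
      = (if critical m a' b' then c (dT_entry m a') (dT_entry m b') else 0)"
    by simp
qed

lemma ratio_0 [simp]: "ratio m 0 = 1"
  by (simp add: ratio_def series_mult_def)

lemma level_diag_ratio: "level_diag m (ratio m j)"
  unfolding ratio_def
  by (rule level_diag.closed_series_mult)
    (auto simp: level_diag_bm_part intro: level_diag_mono[OF _ level_diag_series_inv_bm_part])

lemma in_b_minus_ratio: "j < k \<Longrightarrow> in_b_minus (ratio m j)"
  unfolding ratio_def
  by (rule in_b_minus.closed_series_mult) (simp add: in_b_minus_bm_part in_b_minus_series_inv_bm_part)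

lemma level_part_ratio: "level_part (m - 1) (ratio m s) = series_one s"
proof -
  have "level_part (m - 1) (ratio m s)
      = series_mult (\<lambda>j. level_part (m - 1) (bm_part m j)) (series_inv (bm_part (m - 1))) s"
    unfolding ratio_def series_mult_def level_part_def restrict_entries_sum
    by (intro sum.cong refl restrict_entries_mult_right[OF equivp_not_sep]
        level_diag_series_inv_bm_part)
  also have "(\<lambda>j. level_part (m - 1) (bm_part m j)) = bm_part (m - 1)"
    by (rule ext) (simp add: bm_part_def level_part_level_part)
  finally show ?thesis by (simp add: series_mult_inv_right)
qed

lemma ratio_critical:
  assumes "1 \<le> s" "s < k" shows "supported (critical m) (ratio m s)"
  unfolding supported_def
proof (intro allI impI)
  fix a b assume nz: "entry (ratio m s) a b \<noteq> 0"
  have "\<not> sep m a b" using level_diag_ratio nz by (auto simp: supported_def)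
  moreover have "sep (m - 1) a b"
  proof (rule ccontr)
    assume "\<not> sep (m - 1) a b"
    then have "entry (level_part (m - 1) (ratio m s)) a b = entry (ratio m s) a b"
      by (simp add: level_part_def)
    then show False using level_part_ratio[of m s] nz assms by (simp add: series_one_def)
  qed
  moreover have "prec b a"
  proof -
    have "\<not> prec a b" using in_b_minus_ratio[OF assms(2)] nz by (auto simp: supported_def)
    moreover have "sep 0 a b" using sep_mono[of 0 "m - 1"] \<open>sep (m - 1) a b\<close> by blast
    ultimately show ?thesis using prec_total by blast
  qed
  ultimately show "critical m a b" by (simp add: critical_def)
qed

lemma ratio_mult_bm_part: "series_mult (ratio m) (bm_part (m - 1)) = bm_part m"
  by (simp add: ratio_def series_mult_assoc series_mult_inv_left)

lemma rho_eq_coadjoint_sigma: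
  "rho m = rmult k (lmult k (ratio m) (sigma m)) (series_inv (ratio m))"
proof (rule ext)
  fix i
  let ?x = "bm_part (m - 1)" and ?g = "ratio m"
  have inv: "series_inv (bm_part m) = series_mult (series_inv ?x) (series_inv ?g)"
    unfolding ratio_mult_bm_part[of m, symmetric] by (rule series_inv_mult) (simp_all add: ratio_def series_mult_def)
  have "rho m i = rmult k (lmult k (series_mult ?g ?x) (gamma_part m)) (series_mult (series_inv ?x) (series_inv ?g)) i"
    unfolding rho_def inv ratio_mult_bm_part[of m] ..
  also have "\<dots> = rmult k (rmult k (lmult k (series_mult ?g ?x) (gamma_part m)) (series_inv ?x)) (series_inv ?g) i"
    by (rule rmult_rmult[symmetric])
  also have "lmult k (series_mult ?g ?x) (gamma_part m) = lmult k ?g (lmult k ?x (gamma_part m))"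
    by (rule ext) (rule lmult_lmult[symmetric])
  also have "rmult k (lmult k ?g (lmult k ?x (gamma_part m))) (series_inv ?x) = lmult k ?g (sigma m)"
    unfolding sigma_def by (rule ext) (rule lmult_rmult[symmetric])
  finally show "rho m i = rmult k (lmult k ?g (sigma m)) (series_inv ?g) i" .
qed

lemma rho_rmult_ratio: "i < k \<Longrightarrow> rmult k (rho m) (ratio m) i = lmult k (ratio m) (sigma m) i"
  unfolding rho_eq_coadjoint_sigma rmult_rmult series_mult_inv_left[of "ratio m", OF ratio_0]
  by (rule rmult_one)

lemma sigma_eq_coadjoint_rho:
  assumes "i < k" shows "sigma m i = rmult k (lmult k (series_inv (ratio m)) (rho m)) (ratio m) i"
proof -
  have "rmult k (lmult k (series_inv (ratio m)) (rho m)) (ratio m) i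
      = lmult k (series_inv (ratio m)) (rmult k (rho m) (ratio m)) i"
    by (rule lmult_rmult[symmetric])
  also have "\<dots> = lmult k (series_inv (ratio m)) (lmult k (ratio m) (sigma m)) i"
    by (rule lmult_cong) (auto simp: rho_rmult_ratio)
  also have "\<dots> = sigma m i"
    unfolding lmult_lmult series_mult_inv_left[of "ratio m", OF ratio_0] using assms by (rule lmult_one)
  finally show ?thesis by simp
qed

lemma not_critical_mult_left:
  assumes P: "level_diag (m - 1) P" and X: "supported (\<lambda>a b. \<not> critical m a b) X"
  shows "supported (\<lambda>a b. \<not> critical m a b) (P * X)"
proof (rule supported_mult[OF P X])
  fix a c b assume ac: "\<not> sep (m - 1) a c" and cb: "\<not> critical m c b"
  show "\<not> critical m a b"
  proof
    assume M: "critical m a b"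
    have "sep (m - 1) c b" using M ac not_sep_trans unfolding critical_def by blast
    moreover have "\<not> sep m c b"
    proof -
      have "\<not> sep m a c" using ac sep_mono[of "m - 1" m a c] by auto
      then show ?thesis using M not_sep_trans sep_sym unfolding critical_def by blast
    qed
    moreover have "prec b c" using prec_sep_right[of b a "m - 1" c] M ac sep_sym unfolding critical_def by blast
    ultimately have "critical m c b" by (simp add: critical_def)
    with cb show False by simp
  qed
qed

lemma not_critical_mult_right:
  assumes X: "supported (\<lambda>a b. \<not> critical m a b) X" and Q: "level_diag (m - 1) Q"
  shows "supported (\<lambda>a b. \<not> critical m a b) (X * Q)"
proof (rule supported_mult[OF X Q])
  fix a c b assume ac: "\<not> critical m a c" and cb: "\<not> sep (m - 1) c b"
  show "\<not> critical m a b"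
  proof
    assume M: "critical m a b"
    have "sep (m - 1) a c" using M cb not_sep_trans sep_sym unfolding critical_def by blast
    moreover have "\<not> sep m a c"
    proof -
      have "\<not> sep m c b" using cb sep_mono[of "m - 1" m c b] by auto
      then show ?thesis using M not_sep_trans sep_sym unfolding critical_def by blast
    qed
    moreover have "prec c a" using prec_sep_left[of b a "m - 1" c] M cb sep_sym unfolding critical_def by blast
    ultimately have "critical m a c" by (simp add: critical_def)
    with ac show False by simp
  qed
qed

lemma sigma_not_critical:
  assumes "1 \<le> i" "i < k" shows "supported (\<lambda>a b. \<not> critical m a b) (sigma m i)"
proof -
  have gamma_part: "supported (\<lambda>a b. \<not> critical m a b) (gamma_part m j)" if "1 \<le> j" "j < k" for j
    unfolding supported_def
  proof (intro allI impI notI)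
    fix a b assume nz: "entry (gamma_part m j) a b \<noteq> 0" and "critical m a b"
    then have ba: "prec b a" and "a \<noteq> b" by (auto simp: critical_def)
    have "entry (gamma j - dT_elem j) a b = 0"
      using gamma_minus_dT_in_u_plus[OF that] ba prec_asym by (auto simp: supported_def)
    moreover have "entry (dT_elem j) a b = 0" using entry_dT_elem[OF that] \<open>a \<noteq> b\<close> by simp
    ultimately show False using nz by (simp add: gamma_part_def level_part_def split: if_splits)
  qed
  have lmult: "supported (\<lambda>a b. \<not> critical m a b) (lmult k (bm_part (m - 1)) (gamma_part m) j)"
    if "1 \<le> j" for j
    unfolding lmult_def using that
    by (intro supported_sum)
      (auto simp: supported_zero intro!: not_critical_mult_left level_diag_bm_part gamma_part)
  have "supported (\<lambda>a b. \<not> critical m a b)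
      (lmult k (bm_part (m - 1)) (gamma_part m) (i + j) * series_inv (bm_part (m - 1)) j)" for j
    by (rule not_critical_mult_right[OF lmult level_diag_series_inv_bm_part]) (use assms in simp)
  then show ?thesis
    unfolding sigma_def rmult_def by (intro supported_sum) (simp add: supported_zero)
qed

text \<open>The coefficient of degree \<open>m - s\<close> of \<open>rho m \<cdot> ratio m = ratio m \<cdot> sigma m\<close>; all terms of
  degree \<open>> m\<close> in \<open>rho m\<close> and \<open>sigma m\<close> are \<open>dT\<close>, so only the commutator of \<open>ratio m s\<close>
  with the leading term \<open>dT\<^sub>m\<close> and terms with smaller coefficients of \<open>ratio m\<close> remain.\<close>

lemma ratio_commutator_eq:
  assumes s: "1 \<le> s" "s < m" and m: "m < k"
  defines "i \<equiv> m - s"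
  shows "dT_elem m * ratio m s - ratio m s * dT_elem m
       = sigma m i - rho m i - (\<Sum>j\<in>{1..<s}. rho m (i + j) * ratio m j - ratio m j * sigma m (i + j))"
proof -
  have i: "1 \<le> i" "i < k" "i + s = m" using s m by (auto simp: i_def)
  define F where "F j = (if i + j < k then rho m (i + j) * ratio m j - ratio m j * sigma m (i + j) else 0)" for j
  define R where "R = (\<Sum>j\<in>{1..<k}. if i + j < k then rho m (i + j) * ratio m j else 0)"
  define L where "L = (\<Sum>j\<in>{1..<k}. if i + j < k then ratio m j * sigma m (i + j) else 0)"
  have RL: "rho m i + R = sigma m i + L"
    using rho_rmult_ratio[OF i(2), of m] by (simp add: R_def L_def rmult_split lmult_split i(2))
  have "(\<Sum>j\<in>{1..<k}. F j) = R - L"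
    unfolding F_def R_def L_def sum_subtractf[symmetric] by (rule sum.cong) auto
  also have "\<dots> = (rho m i + R) - (rho m i + L)" by simp
  also have "\<dots> = sigma m i - rho m i" unfolding RL by simp
  finally have sum_F: "(\<Sum>j\<in>{1..<k}. F j) = sigma m i - rho m i" .
  have F_high: "F j = 0" if "s < j" for j
  proof (cases "i + j < k")
    case True
    then have "rho m (i + j) = dT_elem (i + j)" "sigma m (i + j) = dT_elem (i + j)"
      using rho_high sigma_high that i s by auto
    moreover have "dT_elem (i + j) * ratio m j = ratio m j * dT_elem (i + j)"
      using dT_elem_commute[of "i + j" m] True that i level_diag_ratio by auto
    ultimately show ?thesis by (simp add: F_def)
  qed (simp add: F_def)
  have "(\<Sum>j\<in>{1..<k}. F j) = (\<Sum>j\<in>{1..<s}. F j) + (\<Sum>j\<in>{s..<k}. F j)"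
    using s m by (simp add: sum.atLeastLessThan_concat)
  also have "(\<Sum>j\<in>{s..<k}. F j) = F s + (\<Sum>j\<in>{Suc s..<k}. F j)"
    using s m by (simp add: sum.atLeast_Suc_lessThan)
  also have "(\<Sum>j\<in>{Suc s..<k}. F j) = 0" by (rule sum.neutral) (auto simp: F_high)
  finally have split: "(\<Sum>j\<in>{1..<k}. F j) = (\<Sum>j\<in>{1..<s}. F j) + F s" by simp
  have low: "(\<Sum>j\<in>{1..<s}. F j)
      = (\<Sum>j\<in>{1..<s}. rho m (i + j) * ratio m j - ratio m j * sigma m (i + j))"
    using i s m by (intro sum.cong) (auto simp: F_def)
  have "dT_elem m * ratio m s - ratio m s * dT_elem m = F s"
    using rho_high sigma_high s m i by (simp add: F_def)
  also have "\<dots> = (\<Sum>j\<in>{1..<k}. F j) - (\<Sum>j\<in>{1..<s}. F j)"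
    unfolding split by simp
  finally show ?thesis unfolding sum_F low .
qed

lemma ratio_eq_masked_commutator:
  assumes m: "1 \<le> m" "m < k" and s: "1 \<le> s" "s < k"
  shows "ratio m s = masked (\<lambda>a b. if critical m a b then inverse (dT_entry m a - dT_entry m b) else 0)
      (dT_elem m * ratio m s - ratio m s * dT_elem m)"
proof (rule mat_ring_eqI)
  fix a b
  show "entry (ratio m s) a b = entry (masked (\<lambda>a b. if critical m a b
      then inverse (dT_entry m a - dT_entry m b) else 0) (dT_elem m * ratio m s - ratio m s * dT_elem m)) a b"
  proof (cases "critical m a b")
    case True
    then have "dT_entry m a \<noteq> dT_entry m b" using dT_entry_neq[OF m] by (simp add: critical_def)
    then show ?thesis using True by (simp add: entry_dT_elem_commutator[OF m] del: entry_diff)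
  next
    case False
    then show ?thesis using ratio_critical[OF s, of m] by (auto simp: supported_def)
  qed
qed

lemma restrict_critical_commutator:
  assumes m: "1 \<le> m" "m < k" and s: "1 \<le> s" "s < k"
  shows "restrict_entries (critical m) (dT_elem m * ratio m s - ratio m s * dT_elem m)
      = dT_elem m * ratio m s - ratio m s * dT_elem m"
  using ratio_critical[OF s, of m]
  by (intro mat_ring_eqI) (auto simp: supported_def entry_dT_elem_commutator[OF m] simp del: entry_diff)

end

locale descent_step = factored k T ord bm bp
  for k :: nat and T :: "nat \<Rightarrow> complex^'n::finite^'n" and ord bm bp +
  fixes S :: "(complex^'n) set" and m :: nat
  assumes subspace: "vec.subspace S" and m: "1 \<le> m" "m < k" and graded_m: "graded m S"
    and rho_preserved: "\<And>i. 1 \<le> i \<Longrightarrow> i < k \<Longrightarrow> preserves S (rho m i)"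
begin

interpretation preserved: subring_pred "preserves S"
  by (rule subring_pred_preserves[OF subspace])

lemma graded_pred_level: "graded (m - 1) S"
  using graded_pred[OF subspace graded_m m] rho_preserved[of m] rho_high[of m m] m by simp

lemma sigma_preserved:
  assumes i: "1 \<le> i" "i < m" and ratio: "\<And>j. 1 \<le> j \<Longrightarrow> j \<le> m - i \<Longrightarrow> preserves S (ratio m j)"
  shows "preserves S (sigma m i)"
proof -
  let ?g = "ratio m"
  define low where "low j = (if j \<le> m then rho m j else 0)" for j
  define high where "high j = (if m < j \<and> j < k then dT_elem j else 0)" for j
  have "sigma m i = rmult k (lmult k (series_inv ?g) (\<lambda>j. low j + high j)) ?g i"
    unfolding sigma_eq_coadjoint_rho[OF less_trans[OF i(2) m(2)]]
    by (intro rmult_cong lmult_cong allI impI) (use i m rho_high in \<open>auto simp: low_def high_def\<close>)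
  also have "\<dots> = rmult k (lmult k (series_inv ?g) low) ?g i + rmult k (lmult k (series_inv ?g) high) ?g i"
    by (rule coadjoint_add)
  also have "rmult k (lmult k (series_inv ?g) high) ?g i = high i"
  proof (rule coadjoint_commuting)
    show "high j * series_inv ?g l = series_inv ?g l * high j" for j l
      using dT_elem_commute[of j m] subring_pred.closed_series_inv[OF subring_pred_level_diag]
        level_diag_ratio
      by (auto simp: high_def)
  qed (use i m in \<open>simp_all add: series_mult_inv_left\<close>)
  also have "high i = 0" using i by (simp add: high_def)
  finally have sigma: "sigma m i = rmult k (lmult k (series_inv ?g) low) ?g i" by simp
  have inv: "preserves S (series_inv ?g j)" if "j \<le> m - i" for j
    using ratio that by (intro preserved.closed_series_inv) auto
  have lmult_low: "preserves S (lmult k (series_inv ?g) low j)" if "i \<le> j" for j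
    unfolding lmult_def
    by (intro preserved.closed_sum)
      (use that i inv rho_preserved in \<open>auto simp: low_def preserved.closed_zero intro!: preserved.closed_mult\<close>)
  have lmult_high: "lmult k (series_inv ?g) low j = 0" if "m < j" for j
    unfolding lmult_def using that by (intro sum.neutral) (auto simp: low_def)
  have "preserves S (lmult k (series_inv ?g) low (i + l) * ?g l)" for l
  proof (cases "i + l \<le> m")
    case True
    then have "preserves S (?g l)" using ratio[of l] by (cases "l = 0") (auto simp: preserved.closed_one)
    then show ?thesis using lmult_low[of "i + l"] by (auto intro: preserved.closed_mult)
  qed (simp add: lmult_high preserved.closed_zero)
  then show ?thesis
    unfolding sigma rmult_def by (intro preserved.closed_sum) (simp add: preserved.closed_zero)
qed

text \<open>The coefficients of \<open>ratio m\<close> are recovered from their commutators with \<open>dT\<^sub>m\<close>, which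
  by \<open>ratio_commutator_eq\<close> are the critical parts of terms already known to preserve \<open>S\<close>.\<close>

lemma ratio_preserved: "1 \<le> s \<Longrightarrow> s < m \<Longrightarrow> preserves S (ratio m s)"
proof (induction s rule: less_induct)
  case (less s)
  define i where "i = m - s"
  have i: "1 \<le> i" "i < k" "i + s = m" using less.prems m by (auto simp: i_def)
  have sk: "1 \<le> s" "s < k" using less.prems m by auto
  let ?C = "dT_elem m * ratio m s - ratio m s * dT_elem m"
  let ?F = "\<Sum>j\<in>{1..<s}. rho m (i + j) * ratio m j - ratio m j * sigma m (i + j)"
  have F: "preserves S ?F"
  proof (rule preserved.closed_sum)
    fix j assume j: "j \<in> {1..<s}"
    have "preserves S (ratio m j)" using less.IH[of j] j less.prems by auto
    moreover have "preserves S (rho m (i + j))" using rho_preserved[of "i + j"] j i m by auto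
    moreover have "preserves S (sigma m (i + j))"
      by (rule sigma_preserved) (use less.IH i j less.prems in auto)
    ultimately show "preserves S (rho m (i + j) * ratio m j - ratio m j * sigma m (i + j))"
      by (intro preserved.closed_diff preserved.closed_mult)
  qed
  have "restrict_entries (critical m) (sigma m i) = 0"
    using sigma_not_critical[OF i(1,2)] by (rule restrict_entries_eq_0)
  then have "?C = - restrict_entries (critical m) (rho m i + ?F)"
    using restrict_critical_commutator[OF m sk] ratio_commutator_eq[OF less.prems m(2)]
    by (simp add: i_def restrict_entries_add restrict_entries_diff)
  moreover have "preserves S (restrict_entries (critical m) (rho m i + ?F))"
    using block_const_critical[OF m, where c = "\<lambda>_ _. 1"] rho_preserved[OF i(1,2)] F
    by (intro preserves_restrict_entries[OF subspace graded_pred_level] preserved.closed_add) simp_all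
  ultimately have "preserves S ?C" by (simp add: preserved.closed_uminus)
  then have "preserves S (masked (\<lambda>a b. if critical m a b
      then inverse (dT_entry m a - dT_entry m b) else 0) ?C)"
    using block_const_critical[OF m, where c = "\<lambda>x y. inverse (x - y)"]
    by (intro preserves_masked[OF subspace graded_pred_level])
  then show ?case by (subst ratio_eq_masked_commutator[OF m sk])
qed

lemma rho_pred_preserved:
  assumes i: "1 \<le> i" "i < k" shows "preserves S (rho (m - 1) i)"
proof -
  have "preserves S (sigma m i)"
  proof (cases "m \<le> i")
    case True
    then show ?thesis
      using sigma_high[OF m(1) True i(2)] preserves_dT_elem[OF subspace graded_pred_level _ i] by simp
  next
    case False
    then show ?thesis using sigma_preserved i ratio_preserved by auto
  qed
  then show ?thesis
    unfolding rho_pred level_part_def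
    by (rule preserves_restrict_entries[OF subspace graded_pred_level])
      (use block_const_sep[of "m - 1" "m - 1" "\<lambda>d. if \<not> d then 1 else 0"] in simp)
qed

end

context factored
begin

definition beta :: "nat \<Rightarrow> 'n mat_ring" where
  "beta = rmult k (lmult k bm gamma) (series_inv bm)"

lemma graded_preserves_rho:
  assumes S: "vec.subspace S" and beta: "\<And>i. 1 \<le> i \<Longrightarrow> i < k \<Longrightarrow> preserves S (beta i)"
  shows "m \<le> k - 1 \<Longrightarrow> graded m S \<and> (\<forall>i. 1 \<le> i \<longrightarrow> i < k \<longrightarrow> preserves S (rho m i))"
proof (induction "k - 1 - m" arbitrary: m)
  case 0
  then have "m = k - 1" by simp
  then show ?case using graded_top[OF S] beta by (simp add: rho_top[simplified] beta_def)
next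
  case (Suc n)
  then have "graded (Suc m) S \<and> (\<forall>i. 1 \<le> i \<longrightarrow> i < k \<longrightarrow> preserves S (rho (Suc m) i))"
    by simp
  then interpret descent_step k T ord bm bp S "Suc m"
    using Suc.hyps(2) by unfold_locales (simp_all add: S)
  show ?case using graded_pred_level rho_pred_preserved by simp
qed

lemma preserves_ratio:
  assumes S: "vec.subspace S" and beta: "\<And>i. 1 \<le> i \<Longrightarrow> i < k \<Longrightarrow> preserves S (beta i)"
    and m: "m < k" and s: "1 \<le> s" "s < m"
  shows "preserves S (ratio m s)"
proof -
  interpret descent_step k T ord bm bp S m
    using graded_preserves_rho[OF S beta, of m] m s by unfold_locales (simp_all add: S)
  show ?thesis by (rule ratio_preserved[OF s])
qed

lemma preserves_bm_part:
  assumes S: "vec.subspace S" and beta: "\<And>i. 1 \<le> i \<Longrightarrow> i < k \<Longrightarrow> preserves S (beta i)"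
  shows "m < k \<Longrightarrow> j < k \<Longrightarrow> preserves S (bm_part m j)"
proof (induction m arbitrary: j)
  interpret preserved: subring_pred "preserves S"
    by (rule subring_pred_preserves[OF S])
  case 0
  then show ?case
    using bm_part_vanishes[of j 0] by (cases "j = 0") (simp_all add: preserved.closed_one preserved.closed_zero)
next
  interpret preserved: subring_pred "preserves S"
    by (rule subring_pred_preserves[OF S])
  case (Suc m)
  show ?case
  proof (cases "Suc m \<le> j \<and> 1 \<le> j")
    case True
    then show ?thesis using bm_part_vanishes[of j "Suc m"] Suc.prems by (simp add: preserved.closed_zero)
  next
    case False
    have "preserves S (series_mult (ratio (Suc m)) (bm_part m) j)"
    proof (rule preserved.closed_series_mult)
      fix s assume "s \<le> j"
      then show "preserves S (ratio (Suc m) s) \<and> preserves S (bm_part m s)"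
        using preserves_ratio[OF S beta, of "Suc m" s] Suc False
        by (cases "s = 0") (auto simp: preserved.closed_one)
    qed
    then show ?thesis using ratio_mult_bm_part[of "Suc m"] by simp
  qed
qed

theorem preserves_beta_imp_graded:
  assumes S: "vec.subspace S" and beta: "\<And>i. 1 \<le> i \<Longrightarrow> i < k \<Longrightarrow> preserves S (beta i)"
  shows "graded 0 S" and "\<And>j. j < k \<Longrightarrow> preserves S (bm j)"
  using graded_preserves_rho[OF S beta, of 0] preserves_bm_part[OF S beta, of "k - 1"] k
  by (simp_all add: bm_part_top[simplified])

lemma lmult_series_inv_bm_beta: "i < k \<Longrightarrow> lmult k (series_inv bm) beta i = rmult k gamma (series_inv bm) i"
  unfolding beta_def lmult_rmult
  by (rule rmult_cong) (simp_all add: lmult_lmult series_mult_inv_left bm0 lmult_one)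

lemma restrict_u_plus_gamma:
  assumes "1 \<le> i" "i < k"
  shows "restrict_entries (\<lambda>a b. prec a b \<and> sep i a b) (gamma i) = gamma i - dT_elem i"
proof -
  have "restrict_entries (\<lambda>a b. prec a b \<and> sep i a b) (gamma i - dT_elem i) = gamma i - dT_elem i"
    by (rule restrict_entries_id[OF gamma_minus_dT_in_u_plus[OF assms]])
  moreover have "restrict_entries (\<lambda>a b. prec a b \<and> sep i a b) (dT_elem i) = 0"
    by (rule restrict_entries_eq_0) (auto simp: supported_def entry_dT_elem[OF assms])
  ultimately show ?thesis by (simp add: restrict_entries_diff)
qed

text \<open>Conversely, \<open>gamma\<^sub>i - dT\<^sub>i\<close> is the \<open>u\<^sub>i\<^sup>+\<close>-part of \<open>B'\<^sub>i\<close> up to terms \<open>gamma\<^sub>i\<^sub>+\<^sub>j b\<^sub>-\<^sup>-\<^sup>1\<^sub>j\<close>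
  of higher degree, so \<open>gamma\<close>, and with it \<open>B\<close>, preserves \<open>S\<close> by descending induction.\<close>

lemma preserves_beta:
  assumes S: "vec.subspace S" and graded: "graded 0 S" and bm: "\<And>j. j < k \<Longrightarrow> preserves S (bm j)"
    and P: "\<And>i. 1 \<le> i \<Longrightarrow> i < k \<Longrightarrow>
      preserves S (restrict_entries (\<lambda>a b. prec a b \<and> sep i a b) (lmult k (series_inv bm) beta i))"
  shows "1 \<le> i \<Longrightarrow> i < k \<Longrightarrow> preserves S (beta i)"
proof -
  interpret preserved: subring_pred "preserves S"
    by (rule subring_pred_preserves[OF S])
  let ?U = "\<lambda>i. restrict_entries (\<lambda>a b. prec a b \<and> sep i a b)"
  have inv: "preserves S (series_inv bm j)" if "j < k" for j
    using bm that by (intro preserved.closed_series_inv) auto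
  have gamma: "preserves S (gamma i)" if "1 \<le> i" "i < k" for i
    using that
  proof (induction "k - i" arbitrary: i rule: less_induct)
    case less
    let ?R = "\<Sum>j\<in>{1..<k}. if i + j < k then gamma (i + j) * series_inv bm j else 0"
    have R: "preserves S ?R"
      using less inv by (intro preserved.closed_sum) (auto intro!: preserved.closed_mult simp: preserved.closed_zero)
    have "lmult k (series_inv bm) beta i = gamma i + ?R"
      using less.prems by (simp add: lmult_series_inv_bm_beta rmult_split)
    then have "gamma i - dT_elem i = ?U i (lmult k (series_inv bm) beta i) - ?U i ?R"
      using restrict_u_plus_gamma[OF less.prems] by (simp add: restrict_entries_add)
    moreover have "preserves S (?U i ?R)"
      by (rule preserves_restrict_entries[OF S graded R block_const_u_plus])
    ultimately have "preserves S (gamma i - dT_elem i)"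
      using P[OF less.prems] by (simp add: preserved.closed_diff)
    moreover have "preserves S (dT_elem i)" using preserves_dT_elem[OF S graded] less.prems by simp
    ultimately show ?case using preserved.closed_add by fastforce
  qed
  show "preserves S (beta i)" if "1 \<le> i" "i < k"
    unfolding beta_def using that bm gamma inv
    by (intro preserved.closed_rmult preserved.closed_lmult) auto
qed

end

section \<open>The quiver representation\<close>

lemma ring_of_tmul: "ring_of (tmul f g i) = series_mult (\<lambda>j. ring_of (f j)) (\<lambda>j. ring_of (g j)) i"
  by (simp add: tmul_def series_mult_def ring_of_sum ring_of_mult)

lemma ring_of_tinv: "ring_of (tinv f m) = series_inv (\<lambda>j. ring_of (f j)) m"
proof (induction m rule: less_induct)
  case (less m)
  show ?case
  proof (cases "m = 0")
    case False
    have "(\<Sum>j\<in>{1..m}. ring_of (f j ** tinv f (m - j)))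
        = (\<Sum>j\<in>{1..m}. ring_of (f j) * series_inv (\<lambda>j. ring_of (f j)) (m - j))"
      using less False by (intro sum.cong) (auto simp: ring_of_mult simp del: tinv.simps)
    then show ?thesis using False
      by (subst tinv.simps, subst series_inv.simps) (simp add: ring_of_uminus ring_of_sum del: tinv.simps)
  qed (simp add: ring_of_one)
qed

lemma ring_of_coad:
  "ring_of (coad k b X m)
    = rmult k (lmult k (\<lambda>j. ring_of (b j)) (\<lambda>j. ring_of (X j))) (series_inv (\<lambda>j. ring_of (b j))) m"
proof -
  have "ring_of (coad k b X m) = (\<Sum>j<k. \<Sum>l<k. if m + j + l < k
      then ring_of (b j) * ring_of (X (m + j + l)) * series_inv (\<lambda>j. ring_of (b j)) l else 0)"
    by (simp add: coad_def ring_of_sum ring_of_mult ring_of_tinv ring_of_zero if_distrib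
        del: tinv.simps cong: if_cong)
  also have "\<dots> = (\<Sum>l<k. \<Sum>j<k. if m + j + l < k
      then ring_of (b j) * ring_of (X (m + j + l)) * series_inv (\<lambda>j. ring_of (b j)) l else 0)"
    by (rule sum.swap)
  also have "\<dots> = rmult k (lmult k (\<lambda>j. ring_of (b j)) (\<lambda>j. ring_of (X j))) (series_inv (\<lambda>j. ring_of (b j))) m"
    unfolding rmult_def lmult_def by (auto simp: sum_distrib_right ac_simps intro!: sum.cong)
  finally show ?thesis .
qed

lemma ring_of_Bprime:
  "ring_of (Bprime k bm B m) = lmult k (series_inv (\<lambda>j. ring_of (bm j))) (\<lambda>j. ring_of (B j)) m"
  by (simp add: Bprime_def lmult_def ring_of_sum ring_of_mult ring_of_tinv ring_of_zero if_distrib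
      del: tinv.simps cong: if_cong)

context ordered_blocks
begin

lemma sum_proj: "(\<Sum>p\<in>J k T 0. proj 0 p v) = v"
proof -
  have "(\<Sum>p\<in>J k T 0. proj 0 p v) $ a = v $ a" for a
    by (simp add: proj_def eq_commute finite_J lbl_in_J if_distrib if_distribR sum.If_cases)
  then show ?thesis by (simp add: vec_eq_iff)
qed

lemma proj_in_Vsp: "proj 0 p v \<in> Vsp k T 0 p"
  by (simp add: proj_def Vsp_def)

lemma proj_Vsp: "v \<in> Vsp k T 0 q \<Longrightarrow> proj 0 p v = (if p = q then v else 0)"
  by (auto simp: proj_def Vsp_def vec_eq_iff)

lemma subspace_Vsp: "vec.subspace (Vsp k T 0 p)"
  by (auto simp: vec.subspace_def Vsp_def)

lemma block_mult_vec: "block k T X p q *v w = proj 0 q (X *v proj 0 p w)"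
proof -
  have "(\<Sum>b\<in>UNIV. (if lbl 0 a = q \<and> lbl 0 b = p then X $ a $ b else 0) * w $ b)
      = (if lbl 0 a = q then (\<Sum>b\<in>UNIV. X $ a $ b * (if lbl 0 b = p then w $ b else 0)) else 0)" for a
    by (auto intro!: sum.cong)
  then show ?thesis by (simp add: vec_eq_iff block_def matrix_vector_mult_def proj_def)
qed

lemma proj_proj [simp]: "proj m p (proj m p v) = proj m p v"
  by (simp add: proj_def vec_eq_iff)

lemma block_mult_vec_proj_nth:
  "(block k T X p q *v proj 0 p v) $ a = (if q = lbl 0 a then (X *v proj 0 p v) $ a else 0)"
  unfolding block_mult_vec proj_proj by (simp add: proj_def eq_commute)

lemma mult_vec_eq_sum_blocks:
  "X *v v = (\<Sum>p\<in>J k T 0. \<Sum>q\<in>J k T 0. block k T X p q *v proj 0 p v)"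
proof (rule vec_eq_iff[THEN iffD2], rule allI)
  fix a
  have "(\<Sum>p\<in>J k T 0. \<Sum>q\<in>J k T 0. block k T X p q *v proj 0 p v) $ a
      = (\<Sum>p\<in>J k T 0. \<Sum>q\<in>J k T 0. if q = lbl 0 a then (X *v proj 0 p v) $ a else 0)"
    by (simp add: block_mult_vec_proj_nth)
  also have "\<dots> = (\<Sum>p\<in>J k T 0. \<Sum>b\<in>UNIV. if p = lbl 0 b then X $ a $ b * v $ b else 0)"
    by (auto simp: lbl_in_J finite_J matrix_vector_mult_def proj_def intro!: sum.cong)
  also have "\<dots> = (\<Sum>b\<in>UNIV. \<Sum>p\<in>J k T 0. if p = lbl 0 b then X $ a $ b * v $ b else 0)"
    by (rule sum.swap)
  also have "\<dots> = (X *v v) $ a"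
    by (simp add: lbl_in_J finite_J matrix_vector_mult_def)
  finally show "(X *v v) $ a = (\<Sum>p\<in>J k T 0. \<Sum>q\<in>J k T 0. block k T X p q *v proj 0 p v) $ a" ..
qed

lemma invariant_under_of_blocks:
  assumes S: "vec.subspace S" and graded: "graded 0 S"
    and blocks: "\<And>p q w. p \<in> J k T 0 \<Longrightarrow> q \<in> J k T 0 \<Longrightarrow> w \<in> S \<Longrightarrow> w \<in> Vsp k T 0 p \<Longrightarrow>
      block k T X p q *v w \<in> S"
  shows "invariant_under S X"
  unfolding invariant_under_def
proof
  fix v assume "v \<in> S"
  then have "block k T X p q *v proj 0 p v \<in> S" if "p \<in> J k T 0" "q \<in> J k T 0" for p q
    using that graded blocks proj_in_Vsp by (simp add: graded_def)
  then show "X *v v \<in> S"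
    unfolding mult_vec_eq_sum_blocks[of X v] by (intro vec.subspace_sum[OF S]) auto
qed

lemma block_nonzero:
  "block k T X p q \<noteq> 0 \<Longrightarrow> \<exists>a b. lbl 0 a = q \<and> lbl 0 b = p \<and> X $ a $ b \<noteq> 0"
  by (auto simp: block_def vec_eq_iff split: if_splits)

lemma mpq_ge: "ltJ k ord i (lbl i a) (lbl i b) \<Longrightarrow> i \<le> mpq k ord (lbl 0 a) (lbl 0 b)"
  unfolding mpq_def using lbl_drop[of 0 i]
  by (intro Max_ge) (auto simp: pi_J_def ltJ_def)

lemma mpq_le: "ltJ k ord 0 p q \<Longrightarrow> mpq k ord p q \<le> k - 2"
  unfolding mpq_def by (subst Max_le_iff) (auto simp: pi_J_def intro: exI[of _ 0])

lemma proj_span_blocks: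
  assumes W: "\<forall>p\<in>J k T 0. vec.subspace (W p) \<and> W p \<subseteq> Vsp k T 0 p"
    and p: "p \<in> J k T 0" and v: "v \<in> vec.span (\<Union>p\<in>J k T 0. W p)"
  shows "proj 0 p v \<in> W p"
  using v
proof (induction rule: vec.span_induct_alt)
  have Wp: "vec.subspace (W p)" using W p by blast
  {
    case base
    have "proj 0 p 0 = 0" by (simp add: proj_def vec_eq_iff)
    then show ?case using Wp vec.subspace_0 by simp
  next
    case (step c x y)
    then obtain q where q: "q \<in> J k T 0" "x \<in> W q" by blast
    then have "x \<in> Vsp k T 0 q" using W by blast
    then have "proj 0 p x = (if p = q then x else 0)" by (rule proj_Vsp)
    then have "proj 0 p x \<in> W p" using q Wp vec.subspace_0 by auto
    moreover have "proj 0 p (c *s x + y) = c *s proj 0 p x + proj 0 p y"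
      by (simp add: proj_def vec_eq_iff)
    ultimately show ?case using step Wp vec.subspace_add vec.subspace_scale by metis
  }
qed

lemma graded_span_blocks:
  assumes W: "\<forall>p\<in>J k T 0. vec.subspace (W p) \<and> W p \<subseteq> Vsp k T 0 p"
  shows "graded 0 (vec.span (\<Union>p\<in>J k T 0. W p))"
  unfolding graded_def
proof (intro ballI allI)
  fix v p assume v: "v \<in> vec.span (\<Union>p\<in>J k T 0. W p)"
  show "proj 0 p v \<in> vec.span (\<Union>p\<in>J k T 0. W p)"
  proof (cases "p \<in> J k T 0")
    case True
    then show ?thesis using proj_span_blocks[OF W True v] by (auto intro: vec.span_base)
  next
    case False
    then have "proj 0 p v = 0" using lbl_in_J by (auto simp: proj_def vec_eq_iff)
    then show ?thesis by (simp add: vec.span_zero)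
  qed
qed

lemma graded_eq_span_blocks:
  assumes S: "vec.subspace S" and graded: "graded 0 S"
  shows "S = vec.span (\<Union>p\<in>J k T 0. S \<inter> Vsp k T 0 p)"
proof
  show "vec.span (\<Union>p\<in>J k T 0. S \<inter> Vsp k T 0 p) \<subseteq> S"
    by (rule vec.span_minimal) (auto simp: S)
  show "S \<subseteq> vec.span (\<Union>p\<in>J k T 0. S \<inter> Vsp k T 0 p)"
  proof
    fix v assume v: "v \<in> S"
    have "proj 0 p v \<in> vec.span (\<Union>p\<in>J k T 0. S \<inter> Vsp k T 0 p)" if "p \<in> J k T 0" for p
    proof -
      have "proj 0 p v \<in> S \<inter> Vsp k T 0 p" using v graded proj_in_Vsp by (simp add: graded_def)
      then show ?thesis by (intro vec.span_base UN_I[OF that])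
    qed
    then show "v \<in> vec.span (\<Union>p\<in>J k T 0. S \<inter> Vsp k T 0 p)"
      using vec.span_sum[of "J k T 0" "\<lambda>p. proj 0 p v"] by (simp add: sum_proj)
  qed
qed

lemma arrows_level:
  assumes "\<alpha> \<in> arrows k T ord"
  obtains p q i where "\<alpha> = Fwd p q i \<or> \<alpha> = Bwd p q i" "p \<in> J k T 0" "q \<in> J k T 0"
    "ltJ k ord 0 p q" "1 \<le> i" "i < k"
proof -
  obtain p q i where "\<alpha> = Fwd p q i \<or> \<alpha> = Bwd p q i" "p \<in> J k T 0" "q \<in> J k T 0"
      "ltJ k ord 0 p q" "1 \<le> i" "i \<le> mpq k ord p q"
    using assms by (auto simp: arrows_def)
  moreover from this have "i < k" using mpq_le[of p q] k by linarith
  ultimately show thesis using that by blast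
qed

lemma arrow_of_ltJ:
  assumes "ltJ k ord i (lbl i a) (lbl i b)" "1 \<le> i"
  shows "Fwd (lbl 0 a) (lbl 0 b) i \<in> arrows k T ord" and "Bwd (lbl 0 a) (lbl 0 b) i \<in> arrows k T ord"
  using mpq_ge[OF assms(1)] ltJ_mono[OF assms(1), of 0] assms(2) lbl_in_J
  by (auto simp: arrows_def)

end

locale orbit_factorization = ordered_blocks k T ord
  for k :: nat and T :: "nat \<Rightarrow> complex^'n::finite^'n" and ord +
  fixes b bm bp B :: "nat \<Rightarrow> complex^'n^'n"
  assumes B_orbit: "\<forall>m\<in>{1..k-1}. B m = coad k b (dT T) m"
    and b_factor: "\<forall>i<k. b i = tmul bm bp i"
    and bm_0: "bm 0 = mat 1" and bp_0: "bp 0 = mat 1"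
    and bm_u: "\<forall>i\<in>{1..k-1}. u_minus k T ord i (bm i)"
    and bp_p: "\<forall>i\<in>{1..k-1}. p_plus k T ord i (bp i)"
begin

sublocale ring: factored k T ord "\<lambda>j. ring_of (bm j)" "\<lambda>j. ring_of (bp j)"
proof
  show "ring_of (bm 0) = 1" "ring_of (bp 0) = 1" by (simp_all add: bm_0 bp_0 ring_of_one)
  show "supported (\<lambda>a b. prec b a \<and> sep i a b) (ring_of (bm i))" if "1 \<le> i" "i < k" for i
    using bm_u that ltJ_lbl_iff sep_sym by (fastforce simp: supported_def u_minus_def)
  show "supported (\<lambda>a b. \<not> sep i a b \<or> prec a b) (ring_of (bp i))" if "1 \<le> i" "i < k" for i
    using bp_p that ltJ_lbl_iff by (fastforce simp: supported_def p_plus_def leJ_def sep_def)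
qed

abbreviation bmR :: "nat \<Rightarrow> 'n mat_ring" where
  "bmR j \<equiv> ring_of (bm j)"

lemma ring_of_B:
  assumes m: "1 \<le> m" "m < k" shows "ring_of (B m) = ring.beta m"
proof -
  let ?bp = "\<lambda>j. ring_of (bp j)" and ?b = "\<lambda>j. ring_of (b j)"
  have b: "?b j = series_mult bmR ?bp j" if "j < k" for j
    using b_factor that by (simp add: ring_of_tmul)
  have inv: "series_inv ?b j = series_mult (series_inv ?bp) (series_inv bmR) j" if "j < k" for j
    using series_inv_cong[of k ?b "series_mult bmR ?bp" j] b that
      series_inv_mult[of bmR ?bp, OF ring.bm0 ring.bp0]
    by simp
  have "ring_of (B m) = rmult k (lmult k ?b dT_elem) (series_inv ?b) m"
    using B_orbit m by (simp add: ring_of_coad dT_elem_def[abs_def])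
  also have "\<dots> = rmult k (lmult k (series_mult bmR ?bp) dT_elem)
      (series_mult (series_inv ?bp) (series_inv bmR)) m"
    by (rule rmult_cong) (auto intro!: lmult_cong simp: b inv)
  also have "\<dots> = rmult k (rmult k (lmult k (series_mult bmR ?bp) dT_elem) (series_inv ?bp)) (series_inv bmR) m"
    by (rule rmult_rmult[symmetric])
  also have "lmult k (series_mult bmR ?bp) dT_elem = lmult k bmR (lmult k ?bp dT_elem)"
    by (rule ext) (rule lmult_lmult[symmetric])
  also have "rmult k (lmult k bmR (lmult k ?bp dT_elem)) (series_inv ?bp) = lmult k bmR ring.gamma"
    unfolding ring.gamma_def by (rule ext) (rule lmult_rmult[symmetric])
  finally show ?thesis by (simp add: ring.beta_def)
qed

lemma ring_of_Pmat:
  assumes i: "1 \<le> i" "i < k"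
  shows "ring_of (Pmat k T ord bm B i)
    = restrict_entries (\<lambda>a b. prec a b \<and> sep i a b) (lmult k (series_inv bmR) ring.beta i)"
proof -
  have "ring_of (Bprime k bm B i) = lmult k (series_inv bmR) (\<lambda>j. ring_of (B j)) i"
    by (rule ring_of_Bprime)
  also have "\<dots> = lmult k (series_inv bmR) ring.beta i"
    by (rule lmult_cong) (use i ring_of_B in auto)
  finally have B': "ring_of (Bprime k bm B i) = lmult k (series_inv bmR) ring.beta i" .
  show ?thesis
  proof (rule mat_ring_eqI)
    fix a b
    have "entry (ring_of (Pmat k T ord bm B i)) a b
        = (if prec a b \<and> sep i a b then entry (ring_of (Bprime k bm B i)) a b else 0)"
      using ltJ_lbl_iff by (simp add: Pmat_def uplus_part_def)
    then show "entry (ring_of (Pmat k T ord bm B i)) a b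
        = entry (restrict_entries (\<lambda>a b. prec a b \<and> sep i a b) (lmult k (series_inv bmR) ring.beta i)) a b"
      by (simp add: B')
  qed
qed

lemma invariant_span_of_arrow_blocks:
  assumes XI: "Xi_invariant k T ord bm B W"
    and arrow: "\<And>p q. p \<in> J k T 0 \<Longrightarrow> q \<in> J k T 0 \<Longrightarrow> block k T X p q \<noteq> 0 \<Longrightarrow>
      \<exists>\<alpha>\<in>arrows k T ord. src \<alpha> = p \<and> tgt \<alpha> = q \<and> Xi k T ord bm B \<alpha> = block k T X p q"
  shows "invariant_under (vec.span (\<Union>p\<in>J k T 0. W p)) X"
proof -
  have W: "\<forall>p\<in>J k T 0. vec.subspace (W p) \<and> W p \<subseteq> Vsp k T 0 p"
    using XI by (simp add: Xi_invariant_def)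
  show ?thesis
  proof (rule invariant_under_of_blocks[OF vec.subspace_span graded_span_blocks[OF W]])
    fix p q w assume p: "p \<in> J k T 0" and q: "q \<in> J k T 0"
      and w: "w \<in> vec.span (\<Union>p\<in>J k T 0. W p)" "w \<in> Vsp k T 0 p"
    show "block k T X p q *v w \<in> vec.span (\<Union>p\<in>J k T 0. W p)"
    proof (cases "block k T X p q = 0")
      case False
      then obtain \<alpha> where \<alpha>: "\<alpha> \<in> arrows k T ord" "src \<alpha> = p" "tgt \<alpha> = q"
        "Xi k T ord bm B \<alpha> = block k T X p q"
        using arrow p q by blast
      have "w \<in> W p" using proj_span_blocks[OF W p w(1)] proj_Vsp[OF w(2)] by simp
      then have "block k T X p q *v w \<in> W q" using XI \<alpha> by (auto simp: Xi_invariant_def)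
      then show ?thesis using q by (auto intro: vec.span_base)
    qed (simp add: vec.span_zero)
  qed
qed

lemma invariant_bm_of_Xi_invariant:
  assumes XI: "Xi_invariant k T ord bm B W" and j: "j < k"
  shows "invariant_under (vec.span (\<Union>p\<in>J k T 0. W p)) (bm j)"
proof (cases "j = 0")
  case True
  then show ?thesis by (simp add: bm_0 invariant_under_def)
next
  case False
  show ?thesis
  proof (rule invariant_span_of_arrow_blocks[OF XI])
    fix p q assume "block k T (bm j) p q \<noteq> 0"
    then obtain a c where ac: "lbl 0 a = q" "lbl 0 c = p" "bm j $ a $ c \<noteq> 0"
      using block_nonzero by blast
    then have "ltJ k ord j (lbl j c) (lbl j a)"
      using bm_u False j by (auto simp: u_minus_def)
    then have "Fwd p q j \<in> arrows k T ord"
      using arrow_of_ltJ(1) False ac by fastforce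
    then show "\<exists>\<alpha>\<in>arrows k T ord. src \<alpha> = p \<and> tgt \<alpha> = q \<and> Xi k T ord bm B \<alpha> = block k T (bm j) p q"
      using False by (intro bexI[of _ "Fwd p q j"]) (auto simp: Qmat_def)
  qed
qed

lemma invariant_Pmat_of_Xi_invariant:
  assumes XI: "Xi_invariant k T ord bm B W" and i: "1 \<le> i"
  shows "invariant_under (vec.span (\<Union>p\<in>J k T 0. W p)) (Pmat k T ord bm B i)"
proof (rule invariant_span_of_arrow_blocks[OF XI])
  fix p q assume "block k T (Pmat k T ord bm B i) p q \<noteq> 0"
  then obtain a c where ac: "lbl 0 a = q" "lbl 0 c = p" "Pmat k T ord bm B i $ a $ c \<noteq> 0"
    using block_nonzero by blast
  then have "ltJ k ord i (lbl i a) (lbl i c)"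
    by (auto simp: Pmat_def uplus_part_def split: if_splits)
  then have "Bwd q p i \<in> arrows k T ord"
    using arrow_of_ltJ(2) i ac by fastforce
  then show "\<exists>\<alpha>\<in>arrows k T ord. src \<alpha> = p \<and> tgt \<alpha> = q
      \<and> Xi k T ord bm B \<alpha> = block k T (Pmat k T ord bm B i) p q"
    by (intro bexI[of _ "Bwd q p i"]) auto
qed

theorem Xi_invariant_imp_invariant_B:
  assumes XI: "Xi_invariant k T ord bm B W" and i: "1 \<le> i" "i < k"
  shows "invariant_under (vec.span (\<Union>p\<in>J k T 0. W p)) (B i)"
proof -
  let ?S = "vec.span (\<Union>p\<in>J k T 0. W p)"
  have graded: "graded 0 ?S"
    using XI by (intro graded_span_blocks) (simp add: Xi_invariant_def)
  have "preserves ?S (ring.beta i)"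
  proof (rule ring.preserves_beta[OF vec.subspace_span graded _ _ i])
    show "preserves ?S (bmR j)" if "j < k" for j
      using invariant_bm_of_Xi_invariant[OF XI that] by (simp add: preserves_ring_of)
    show "preserves ?S (restrict_entries (\<lambda>a b. prec a b \<and> sep i a b) (lmult k (series_inv bmR) ring.beta i))"
      if "1 \<le> i" "i < k" for i
      using invariant_Pmat_of_Xi_invariant[OF XI that(1)] ring_of_Pmat[OF that]
      by (simp add: preserves_ring_of[symmetric])
  qed
  then show ?thesis using ring_of_B[OF i] by (simp add: preserves_ring_of[symmetric])
qed

lemma Xi_invariant_inter_Vsp:
  assumes S: "vec.subspace S" and graded: "graded 0 S"
    and arrows: "\<And>\<alpha>. \<alpha> \<in> arrows k T ord \<Longrightarrow>
      \<exists>X. invariant_under S X \<and> Xi k T ord bm B \<alpha> = block k T X (src \<alpha>) (tgt \<alpha>)"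
  shows "Xi_invariant k T ord bm B (\<lambda>p. S \<inter> Vsp k T 0 p)"
  unfolding Xi_invariant_def
proof (intro conjI ballI)
  fix p show "vec.subspace (S \<inter> Vsp k T 0 p)" by (rule vec.subspace_inter[OF S subspace_Vsp])
  show "S \<inter> Vsp k T 0 p \<subseteq> Vsp k T 0 p" by blast
next
  fix \<alpha> w assume \<alpha>: "\<alpha> \<in> arrows k T ord" and w: "w \<in> S \<inter> Vsp k T 0 (src \<alpha>)"
  obtain X where X: "invariant_under S X" "Xi k T ord bm B \<alpha> = block k T X (src \<alpha>) (tgt \<alpha>)"
    using arrows[OF \<alpha>] by blast
  have "Xi k T ord bm B \<alpha> *v w = proj 0 (tgt \<alpha>) (X *v w)"
    using w X(2) proj_Vsp[of w "src \<alpha>" "src \<alpha>"] by (simp add: block_mult_vec)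
  moreover have "X *v w \<in> S" using X(1) w by (simp add: invariant_under_def)
  ultimately show "Xi k T ord bm B \<alpha> *v w \<in> S \<inter> Vsp k T 0 (tgt \<alpha>)"
    using graded proj_in_Vsp by (simp add: graded_def)
qed

theorem invariant_B_imp_graded_Xi_invariant:
  assumes S: "vec.subspace S" and B: "\<And>i. 1 \<le> i \<Longrightarrow> i < k \<Longrightarrow> invariant_under S (B i)"
  shows "S = vec.span (\<Union>p\<in>J k T 0. S \<inter> Vsp k T 0 p)"
    and "Xi_invariant k T ord bm B (\<lambda>p. S \<inter> Vsp k T 0 p)"
proof -
  interpret preserved: subring_pred "preserves S"
    by (rule subring_pred_preserves[OF S])
  have beta: "preserves S (ring.beta i)" if "1 \<le> i" "i < k" for i
    using B[OF that] ring_of_B[OF that] by (simp add: preserves_ring_of[symmetric])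
  have graded: "graded 0 S" and bm: "\<And>j. j < k \<Longrightarrow> preserves S (bmR j)"
    using ring.preserves_beta_imp_graded[OF S beta] by auto
  show "S = vec.span (\<Union>p\<in>J k T 0. S \<inter> Vsp k T 0 p)"
    by (rule graded_eq_span_blocks[OF S graded])
  have Pmat: "invariant_under S (Pmat k T ord bm B i)" if i: "1 \<le> i" "i < k" for i
  proof -
    have "preserves S (lmult k (series_inv bmR) ring.beta i)"
      using bm beta i by (intro preserved.closed_lmult preserved.closed_series_inv) auto
    then have "preserves S (restrict_entries (\<lambda>a b. prec a b \<and> sep i a b) (lmult k (series_inv bmR) ring.beta i))"
      by (rule preserves_restrict_entries[OF S graded _ block_const_u_plus])
    then show ?thesis using ring_of_Pmat[OF i] by (simp add: preserves_ring_of[symmetric])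
  qed
  show "Xi_invariant k T ord bm B (\<lambda>p. S \<inter> Vsp k T 0 p)"
  proof (rule Xi_invariant_inter_Vsp[OF S graded])
    fix \<alpha> assume "\<alpha> \<in> arrows k T ord"
    then obtain p q i where "\<alpha> = Fwd p q i \<or> \<alpha> = Bwd p q i" "1 \<le> i" "i < k"
      by (rule arrows_level)
    then show "\<exists>X. invariant_under S X \<and> Xi k T ord bm B \<alpha> = block k T X (src \<alpha>) (tgt \<alpha>)"
      using bm[of i] Pmat[of i] by (auto simp: Qmat_def preserves_ring_of)
  qed
qed

end

theorem lemma3p11:
  fixes k :: nat
    and T :: "nat \<Rightarrow> complex^'n::finite^'n"
    and ord :: "nat \<Rightarrow> (complex list \<times> complex list) set"
    and b bm bp B :: "nat \<Rightarrow> complex^'n^'n"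
  assumes k: "k > 1"
    and T_cartan: "\<forall>i\<in>{1..k-1}. is_diag (T i)"
    and T_top: "T (k - 1) \<noteq> 0"
    and ord_total: "\<forall>i\<le>k-2. strict_linear_order_on (J k T i) (ord i)"
    and ord_compat: "\<forall>i. i + 1 \<le> k - 2 \<longrightarrow> (\<forall>p\<in>J k T i. \<forall>q\<in>J k T i.
                       (pi_J 1 p, pi_J 1 q) \<in> ord (i + 1) \<longrightarrow> (p, q) \<in> ord i)"
    and b_Bk: "b 0 = mat 1"
    and B_orbit: "\<forall>m\<in>{1..k-1}. B m = coad k b (dT T) m"
    and fact: "\<forall>i<k. b i = tmul bm bp i"
    and bm0: "bm 0 = mat 1" and bp0: "bp 0 = mat 1"
    and bm_u: "\<forall>i\<in>{1..k-1}. u_minus k T ord i (bm i)"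
    and bp_p: "\<forall>i\<in>{1..k-1}. p_plus k T ord i (bp i)"
  shows "(\<forall>W. Xi_invariant k T ord bm B W \<longrightarrow>
            (\<forall>i\<in>{1..k-1}. invariant_under (vec.span (\<Union>p\<in>J k T 0. W p)) (B i)))
       \<and> (\<forall>S. vec.subspace S \<and> (\<forall>i\<in>{1..k-1}. invariant_under S (B i)) \<longrightarrow>
            S = vec.span (\<Union>p\<in>J k T 0. S \<inter> Vsp k T 0 p)
          \<and> Xi_invariant k T ord bm B (\<lambda>p. S \<inter> Vsp k T 0 p))"
proof -
  interpret orbit_factorization k T ord b bm bp B
    using k T_cartan ord_total ord_compat B_orbit fact bm0 bp0 bm_u bp_p by unfold_locales
  show ?thesis
  proof (intro conjI allI impI ballI)
    fix W i assume XI: "Xi_invariant k T ord bm B W" and "i \<in> {1..k-1}"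
    then have "1 \<le> i" "i < k" using k by auto
    with XI show "invariant_under (vec.span (\<Union>p\<in>J k T 0. W p)) (B i)"
      by (rule Xi_invariant_imp_invariant_B)
  next
    fix S assume S: "vec.subspace S \<and> (\<forall>i\<in>{1..k-1}. invariant_under S (B i))"
    then have sub: "vec.subspace S" and inv: "\<And>i. 1 \<le> i \<Longrightarrow> i < k \<Longrightarrow> invariant_under S (B i)"
      by auto
    show "S = vec.span (\<Union>p\<in>J k T 0. S \<inter> Vsp k T 0 p)"
      using sub inv by (rule invariant_B_imp_graded_Xi_invariant(1))
    show "Xi_invariant k T ord bm B (\<lambda>p. S \<inter> Vsp k T 0 p)"
      using sub inv by (rule invariant_B_imp_graded_Xi_invariant(2))
  qed
qed

end
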